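(* Let $m\ge2$ and let $\mathcal{M}\subset\mathbb{R}^{m+1}$ be a smooth embedded hypersurface, $x\in\mathcal{M}$, and let $\mathbf{n}$ be a smooth unit normal vector field on a neighborhood of $x$ in $\mathcal{M}$. For $y\in\mathcal{M}$ near $x$, $y\neq x$, set $$\Omega_y(x)=\frac{2\sin\big(\theta(x,y)/2\big)}{\|x-y\|},\qquad \theta(x,y)=\arccos\big(\mathbf{n}(x)\cdot\mathbf{n}(y)\big).$$ For small $\epsilon>0$ let $A_\epsilon=\{y\in\mathcal{M}:\|x-y\|=\epsilon\}$ (intersected with this neighborhood), equipped with its induced $(m-1)$-dimensional volume measure $\lambda$ and total volume $|A_\epsilon|$. Then $$\psi(\mathcal{L}_x)=\lim_{\epsilon\to0}\frac{1}{|A_\epsilon|}\int_{A_\epsilon}\Omega_y(x)\,d\lambda(y),$$ i.e. the absolute variation curvature at $x$ equals $\psi(\mathcal{L}_x)$.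
   Context: The shape operator $\mathcal{L}_x:T_x\mathcal{M}\to T_x\mathcal{M}$ is $\mathcal{L}_xY=-D_Y\mathbf{n}$ (the negative directional derivative of the unit normal field in direction $Y$). For a linear map $T$ on an $m$-dimensional inner product space $V$, $\psi(T)=\frac{1}{\operatorname{vol}(S^{m-1})}\int_{S^{m-1}}\|Tv\|\,dv$ is the mean of $\|Tv\|$ over the unit sphere $S^{m-1}$ of $V$ with respect to its uniform surface measure; here $V=T_x\mathcal{M}$. *)

theory Defs
  imports "HOL-Analysis.Analysis"
begin

fun iter_dd :: "'a::real_normed_vector list \<Rightarrow> ('a \<Rightarrow> 'b::real_normed_vector) \<Rightarrow> 'a \<Rightarrow> 'b" where
  "iter_dd [] f = f"
| "iter_dd (v # vs) f = (\<lambda>y. frechet_derivative (iter_dd vs f) (at y) v)"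

definition smooth_on :: "'a::real_normed_vector set \<Rightarrow> ('a \<Rightarrow> 'b::real_normed_vector) \<Rightarrow> bool" where
  "smooth_on U f \<longleftrightarrow> open U \<and> (\<forall>vs. iter_dd vs f differentiable_on U)"

definition smooth_on_subset :: "'a::real_normed_vector set \<Rightarrow> ('a \<Rightarrow> 'b::real_normed_vector) \<Rightarrow> bool" where
  "smooth_on_subset S f \<longleftrightarrow>
     (\<forall>p\<in>S. \<exists>U F. p \<in> U \<and> smooth_on U F \<and> (\<forall>y\<in>S \<inter> U. F y = f y))"

definition smooth_hypersurface :: "'a::euclidean_space set \<Rightarrow> bool" where
  "smooth_hypersurface M \<longleftrightarrow>
     (\<forall>p\<in>M. \<exists>U f. p \<in> U \<and> smooth_on U (f :: 'a \<Rightarrow> real) \<and>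
        (\<forall>y\<in>U. frechet_derivative f (at y) \<noteq> (\<lambda>v. 0)) \<and>
        M \<inter> U = {y \<in> U. f y = 0})"

definition tangent_space :: "'a::euclidean_space set \<Rightarrow> 'a \<Rightarrow> 'a set" where
  "tangent_space M p = {v. \<exists>\<gamma> e. e > 0 \<and> (\<forall>t\<in>{-e<..<e}. \<gamma> t \<in> M) \<and> \<gamma> 0 = p \<and>
                              (\<gamma> has_vector_derivative v) (at 0)}"

definition shape_operator :: "'a::euclidean_space set \<Rightarrow> ('a \<Rightarrow> 'a) \<Rightarrow> 'a \<Rightarrow> 'a \<Rightarrow> 'a" where
  "shape_operator M n x = (\<lambda>Y. - frechet_derivative n (at x within M) Y)"

definition hausdorff_pre :: "real \<Rightarrow> real \<Rightarrow> 'a::metric_space set \<Rightarrow> ennreal" where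
  "hausdorff_pre s \<delta> A =
     (INF C \<in> {C :: nat \<Rightarrow> 'a set. A \<subseteq> (\<Union>i. C i) \<and> (\<forall>i. bounded (C i) \<and> diameter (C i) \<le> \<delta>)}.
        (\<Sum>i. ennreal (diameter (C i) powr s)))"

definition hausdorff_outer :: "real \<Rightarrow> 'a::metric_space set \<Rightarrow> ennreal" where
  "hausdorff_outer s A = (SUP \<delta> \<in> {0<..}. hausdorff_pre s \<delta> A)"

definition hausdorff_measure :: "real \<Rightarrow> 'a::metric_space measure" where
  "hausdorff_measure s = measure_of UNIV (sets borel) (hausdorff_outer s)"

text \<open>Mean of norm (T v) over the unit sphere of the subspace V (dimension m),
  w.r.t. the (m-1)-dimensional surface measure (normalization cancels).\<close>
definition psi :: "nat \<Rightarrow> 'a::euclidean_space set \<Rightarrow> ('a \<Rightarrow> 'a) \<Rightarrow> real" where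
  "psi m V T = (let S = {v \<in> V. norm v = 1}; H = hausdorff_measure (real m - 1) in
     (LINT v:S|H. norm (T v)) / measure H S)"

definition Omega :: "('a::euclidean_space \<Rightarrow> 'a) \<Rightarrow> 'a \<Rightarrow> 'a \<Rightarrow> real" where
  "Omega n x y = 2 * sin (arccos (n x \<bullet> n y) / 2) / norm (x - y)"

end

theory Submission
  imports Defs
begin

text \<open>
  Let \<open>\<nu>\<close> be the unit normal of \<open>M\<close> at \<open>x\<close>, so that the tangent space is the hyperplane
  \<open>\<nu>\<^sup>\<bottom>\<close>, and let \<open>S\<close> be its unit sphere. Near \<open>x\<close>, \<open>M\<close> is the graph over \<open>\<nu>\<^sup>\<bottom>\<close> of a
  function with arbitrarily small Lipschitz constant \<open>\<eta>\<close>. Hence for small \<open>\<epsilon>\<close> the radial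
  projection \<open>\<pi> y = sgn (proj_perp \<nu> (y - x))\<close> maps the sphere section \<open>M \<inter> sphere x \<epsilon>\<close> onto \<open>S\<close>,
  with lower and upper Lipschitz constants \<open>(1 - \<eta>) / \<epsilon>\<close> and \<open>(1 + \<eta>)\<^sup>2 / \<epsilon>\<close>.
  A \<open>c\<close>-Lipschitz map increases \<open>s\<close>-dimensional Hausdorff measure by at most the factor \<open>c powr s\<close>,
  so transporting a bounded function along \<open>\<pi>\<close> changes its average by an amount controlled by
  \<open>((1 + \<eta>)\<^sup>2 / (1 - \<eta>)) powr s - 1\<close>. Since the normals are unit vectors,
  \<open>Omega n x y = norm (n x - n y) / \<epsilon>\<close>, which by differentiability of \<open>n\<close> is within \<open>O(\<eta>)\<close>
  of \<open>norm (D (\<pi> y))\<close> for the derivative \<open>D\<close> of \<open>n\<close> at \<open>x\<close>, i.e. of the norm of the shape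
  operator applied to \<open>\<pi> y\<close>. Letting \<open>\<eta> \<rightarrow> 0\<close> gives the limit.
\<close>

lemma lipschitz_image_bounded_diameter:
  fixes f :: "'a::real_normed_vector \<Rightarrow> 'b::real_normed_vector"
  assumes f: "c-lipschitz_on E f" and C: "bounded C"
  shows "bounded (f ` (C \<inter> E))" and "diameter (f ` (C \<inter> E)) \<le> c * diameter C"
proof -
  have *: "dist p q \<le> c * diameter C" if pq: "p \<in> f ` (C \<inter> E)" "q \<in> f ` (C \<inter> E)" for p q
  proof -
    obtain a b where ab: "a \<in> C \<inter> E" "b \<in> C \<inter> E" "p = f a" "q = f b" using pq by blast
    have "dist p q \<le> c * dist a b" using lipschitz_onD[OF f] ab by auto
    also have "\<dots> \<le> c * diameter C"
      using diameter_bounded_bound[OF C] ab lipschitz_on_nonneg[OF f] by (auto intro: mult_left_mono)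
    finally show ?thesis .
  qed
  then show "bounded (f ` (C \<inter> E))" unfolding bounded_two_points by blast
  show "diameter (f ` (C \<inter> E)) \<le> c * diameter C"
    using * diameter_ge_0[OF C] lipschitz_on_nonneg[OF f] by (intro diameter_le) (auto simp: dist_norm)
qed

lemma hausdorff_pre_lipschitz_cover:
  fixes f :: "'a::real_normed_vector \<Rightarrow> 'b::real_normed_vector"
  assumes f: "c-lipschitz_on E f" and c: "c > 0" and s: "s \<ge> 0"
    and cover: "E \<subseteq> (\<Union>i. C i)" and C: "\<And>i. bounded (C i) \<and> diameter (C i) \<le> \<delta>"
  shows "hausdorff_pre s (c * \<delta>) (f ` E) \<le> ennreal (c powr s) * (\<Sum>i. ennreal (diameter (C i) powr s))"
proof -
  define C' where "C' i = f ` (C i \<inter> E)" for i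
  have C': "bounded (C' i)" "diameter (C' i) \<le> c * diameter (C i)" for i
    unfolding C'_def using lipschitz_image_bounded_diameter[OF f] C by auto
  have "hausdorff_pre s (c * \<delta>) (f ` E) \<le> (\<Sum>i. ennreal (diameter (C' i) powr s))"
    unfolding hausdorff_pre_def
  proof (rule INF_lower, safe)
    show "diameter (C' i) \<le> c * \<delta>" for i
      using C'(2)[of i] C c by (meson mult_left_mono order.trans less_imp_le)
  qed (use cover C' in \<open>force simp: C'_def\<close>)+
  also have "\<dots> \<le> (\<Sum>i. ennreal (c powr s) * ennreal (diameter (C i) powr s))"
  proof (intro suminf_le allI)
    fix i
    have "diameter (C' i) powr s \<le> (c * diameter (C i)) powr s"
      using C' s diameter_ge_0 by (intro powr_mono2) auto
    also have "\<dots> = c powr s * diameter (C i) powr s"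
      using c C diameter_ge_0 by (simp add: powr_mult)
    finally show "ennreal (diameter (C' i) powr s) \<le> ennreal (c powr s) * ennreal (diameter (C i) powr s)"
      by (simp add: ennreal_leI flip: ennreal_mult'')
  qed auto
  finally show ?thesis by simp
qed

lemma hausdorff_pre_lipschitz_image:
  fixes f :: "'a::real_normed_vector \<Rightarrow> 'b::real_normed_vector"
  assumes f: "c-lipschitz_on E f" and c: "c > 0" and s: "s \<ge> 0"
  shows "hausdorff_pre s (c * \<delta>) (f ` E) \<le> ennreal (c powr s) * hausdorff_pre s \<delta> E"
proof -
  define k where "k = ennreal (c powr s)"
  have k: "k * ennreal (1 / c powr s) = 1"
    unfolding k_def using c by (simp flip: ennreal_mult'')
  have "ennreal (1 / c powr s) * hausdorff_pre s (c * \<delta>) (f ` E) \<le> hausdorff_pre s \<delta> E"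
    unfolding hausdorff_pre_def[of s \<delta>]
  proof (rule INF_greatest, clarify)
    fix C :: "nat \<Rightarrow> 'a set"
    assume "E \<subseteq> (\<Union>i. C i)" "\<forall>i. bounded (C i) \<and> diameter (C i) \<le> \<delta>"
    then have "ennreal (1 / c powr s) * hausdorff_pre s (c * \<delta>) (f ` E)
        \<le> ennreal (1 / c powr s) * (k * (\<Sum>i. ennreal (diameter (C i) powr s)))"
      unfolding k_def by (intro mult_left_mono hausdorff_pre_lipschitz_cover[OF f c s]) auto
    then show "ennreal (1 / c powr s) * hausdorff_pre s (c * \<delta>) (f ` E)
        \<le> (\<Sum>i. ennreal (diameter (C i) powr s))"
      using k by (simp add: mult.assoc[symmetric] mult.commute)
  qed
  then have "k * (ennreal (1 / c powr s) * hausdorff_pre s (c * \<delta>) (f ` E)) \<le> k * hausdorff_pre s \<delta> E"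
    by (rule mult_left_mono) simp
  then show ?thesis
    using k by (simp add: k_def mult.assoc[symmetric])
qed

lemma hausdorff_outer_lipschitz_image:
  fixes f :: "'a::real_normed_vector \<Rightarrow> 'b::real_normed_vector"
  assumes f: "c-lipschitz_on E f" and c: "c > 0" and s: "s \<ge> 0"
  shows "hausdorff_outer s (f ` E) \<le> ennreal (c powr s) * hausdorff_outer s E"
  unfolding hausdorff_outer_def[of s "f ` E"]
proof (rule SUP_least)
  fix \<delta> :: real assume \<delta>: "\<delta> \<in> {0<..}"
  have "hausdorff_pre s \<delta> (f ` E) = hausdorff_pre s (c * (\<delta> / c)) (f ` E)"
    using c by simp
  also have "\<dots> \<le> ennreal (c powr s) * hausdorff_pre s (\<delta> / c) E"
    by (rule hausdorff_pre_lipschitz_image[OF f c s])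
  also have "\<dots> \<le> ennreal (c powr s) * hausdorff_outer s E"
    unfolding hausdorff_outer_def using \<delta> c by (intro mult_left_mono SUP_upper) auto
  finally show "hausdorff_pre s \<delta> (f ` E) \<le> ennreal (c powr s) * hausdorff_outer s E" .
qed

lemma sets_hausdorff_measure [simp, measurable_cong]:
  "sets (hausdorff_measure s :: 'a::metric_space measure) = sets borel"
  unfolding hausdorff_measure_def by (simp add: sets_measure_of_conv sets.sigma_sets_eq[of borel, unfolded space_borel])

lemma emeasure_hausdorff_measure:
  assumes "measure_space UNIV (sets borel) (hausdorff_outer s :: 'a::metric_space set \<Rightarrow> ennreal)"
    and "B \<in> sets borel"
  shows "emeasure (hausdorff_measure s :: 'a measure) B = hausdorff_outer s B"
  using assms unfolding hausdorff_measure_def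
  by (simp add: emeasure_measure_of_conv sets.sigma_sets_eq[of borel, unfolded space_borel])

lemma measure_hausdorff_measure_degenerate:
  assumes "\<not> measure_space UNIV (sets borel) (hausdorff_outer s :: 'a::metric_space set \<Rightarrow> ennreal)"
  shows "measure (hausdorff_measure s :: 'a measure) B = 0"
  using assms unfolding hausdorff_measure_def measure_def
  by (simp add: emeasure_measure_of_conv sets.sigma_sets_eq[of borel, unfolded space_borel])

lemma borel_measurable_extend_lipschitz:
  fixes p :: "'a::metric_space \<Rightarrow> 'b::real_normed_vector"
  assumes "c-lipschitz_on A p" "A \<in> sets borel"
  shows "(\<lambda>y. if y \<in> A then p y else 0) \<in> borel_measurable borel"
  using assms lipschitz_on_continuous_on by (intro borel_measurable_continuous_on_if) auto

lemma hausdorff_emeasure_lipschitz_image: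
  fixes p :: "'a::euclidean_space \<Rightarrow> 'a"
  assumes H: "measure_space UNIV (sets borel) (hausdorff_outer s :: 'a set \<Rightarrow> ennreal)"
    and s: "s \<ge> 0" and p: "c-lipschitz_on B p" "c > 0" and B: "B \<in> sets borel" "p ` B \<in> sets borel"
  shows "emeasure (hausdorff_measure s) (p ` B) \<le> ennreal (c powr s) * emeasure (hausdorff_measure s) B"
  using hausdorff_outer_lipschitz_image[OF p(1,2) s] by (simp add: emeasure_hausdorff_measure[OF H] B)

lemma nn_integral_distr_density_indicator:
  assumes [measurable]: "A \<in> sets M" "T \<in> measurable M N" "g \<in> borel_measurable N"
  shows "(\<integral>\<^sup>+v. g v \<partial>distr (density M (indicator A)) N T) = (\<integral>\<^sup>+y\<in>A. g (T y) \<partial>M)"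
proof -
  have "(\<integral>\<^sup>+v. g v \<partial>distr (density M (indicator A)) N T) = (\<integral>\<^sup>+y. g (T y) \<partial>density M (indicator A))"
    by (rule nn_integral_distr) measurable
  also have "\<dots> = (\<integral>\<^sup>+y. indicator A y * g (T y) \<partial>M)"
    by (rule nn_integral_density) measurable
  finally show ?thesis by (simp add: mult.commute)
qed

lemma hausdorff_nn_integral_lipschitz_image:
  fixes s c :: real and p :: "'a::euclidean_space \<Rightarrow> 'a" and g :: "'a \<Rightarrow> ennreal"
  defines "H \<equiv> hausdorff_measure s :: 'a measure"
  assumes H: "measure_space UNIV (sets borel) (hausdorff_outer s :: 'a set \<Rightarrow> ennreal)"
    and s: "s \<ge> 0" and p: "c-lipschitz_on A p" "c > 0"
    and A: "A \<in> sets borel" "p ` A \<in> sets borel" and g: "g \<in> borel_measurable borel"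
  shows "(\<integral>\<^sup>+v\<in>p ` A. g v \<partial>H) \<le> ennreal (c powr s) * (\<integral>\<^sup>+y\<in>A. g (p y) \<partial>H)"
proof -
  define p0 where "p0 y = (if y \<in> A then p y else 0)" for y
  have p0: "p0 \<in> borel_measurable borel"
    unfolding p0_def using p(1) A(1) by (rule borel_measurable_extend_lipschitz)
  define \<mu>A where "\<mu>A = distr (density H (indicator A)) borel p0"
  define \<mu>S where "\<mu>S = density H (indicator (p ` A))"
  have "\<mu>S \<le> scale_measure (ennreal (c powr s)) \<mu>A"
  proof (rule le_measure[THEN iffD2])
    show "sets \<mu>S = sets (scale_measure (ennreal (c powr s)) \<mu>A)"
      by (simp add: \<mu>A_def \<mu>S_def H_def)
    show "\<forall>B\<in>sets \<mu>S. emeasure \<mu>S B \<le> emeasure (scale_measure (ennreal (c powr s)) \<mu>A) B"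
    proof
      fix B assume "B \<in> sets \<mu>S"
      then have B: "B \<in> sets borel" "A \<inter> p0 -` B \<in> sets borel" "p0 -` B \<in> sets borel"
        using measurable_sets_borel[OF p0] A by (auto simp: \<mu>S_def H_def)
      have image: "p ` (A \<inter> p0 -` B) = p ` A \<inter> B" by (auto simp: p0_def)
      have "emeasure \<mu>S B = emeasure H (p ` (A \<inter> p0 -` B))"
        unfolding \<mu>S_def image using A B by (simp add: H_def emeasure_restricted)
      also have "\<dots> \<le> ennreal (c powr s) * emeasure H (A \<inter> p0 -` B)"
        unfolding H_def using image A B p s
        by (intro hausdorff_emeasure_lipschitz_image[OF H] lipschitz_on_subset[OF p(1)]) auto
      also have "emeasure H (A \<inter> p0 -` B) = emeasure \<mu>A B"
        unfolding \<mu>A_def using A B p0 by (simp add: H_def emeasure_distr emeasure_restricted)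
      finally show "emeasure \<mu>S B \<le> emeasure (scale_measure (ennreal (c powr s)) \<mu>A) B"
        by simp
    qed
  qed
  then have "(\<integral>\<^sup>+v. g v \<partial>\<mu>S) \<le> ennreal (c powr s) * (\<integral>\<^sup>+v. g v \<partial>\<mu>A)"
    using g nn_integral_mono_measure[of \<mu>S "scale_measure (ennreal (c powr s)) \<mu>A" g]
    by (simp add: \<mu>A_def \<mu>S_def H_def nn_integral_scale_measure)
  moreover have "(\<integral>\<^sup>+v. g v \<partial>\<mu>S) = (\<integral>\<^sup>+v\<in>p ` A. g v \<partial>H)"
    unfolding \<mu>S_def using A g by (simp add: H_def nn_integral_density mult.commute)
  moreover have "(\<integral>\<^sup>+v. g v \<partial>\<mu>A) = (\<integral>\<^sup>+y\<in>A. g (p0 y) \<partial>H)"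
    unfolding \<mu>A_def using A p0 g by (intro nn_integral_distr_density_indicator) (simp_all add: H_def)
  moreover have "(\<integral>\<^sup>+y\<in>A. g (p0 y) \<partial>H) = (\<integral>\<^sup>+y\<in>A. g (p y) \<partial>H)"
    by (intro nn_integral_cong) (simp add: p0_def indicator_def)
  ultimately show ?thesis by simp
qed

lemma quotient_comparison:
  fixes jA iS mA mS a b :: real
  assumes pos: "0 < mA" "0 < mS" "0 \<le> iS" "0 < a" "0 < b" "1 \<le> a * b"
    and j: "jA \<le> a * iS" "iS \<le> b * jA" and m: "mA \<le> a * mS" "mS \<le> b * mA"
  shows "\<bar>jA / mA - iS / mS\<bar> \<le> (a * b - 1) * (iS / mS)"
proof -
  define \<psi> where "\<psi> = iS / mS"
  have "0 \<le> \<psi>" unfolding \<psi>_def using pos by simp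
  have up: "jA / mA \<le> (a * b) * \<psi>"
  proof -
    have "jA * mS \<le> (a * iS) * (b * mA)" using j m pos by (simp add: mult_mono)
    then show ?thesis unfolding \<psi>_def using pos by (simp add: field_simps)
  qed
  have "\<psi> \<le> (a * b) * (jA / mA)"
  proof -
    have "iS * mA \<le> (b * jA) * (a * mS)" using j m pos by (simp add: mult_mono)
    then show ?thesis unfolding \<psi>_def using pos by (simp add: field_simps)
  qed
  then have "\<psi> - jA / mA \<le> (1 - 1 / (a * b)) * \<psi>"
    using pos by (simp add: field_simps)
  also have "\<dots> \<le> (a * b - 1) * \<psi>"
  proof (rule mult_right_mono)
    have "(a * b - 1) - (1 - 1 / (a * b)) = (a * b - 1)\<^sup>2 / (a * b)"
      using pos by (simp add: field_simps power2_eq_square)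
    moreover have "0 \<le> (a * b - 1)\<^sup>2 / (a * b)" using pos by simp
    ultimately show "1 - 1 / (a * b) \<le> a * b - 1" by linarith
  qed (fact \<open>0 \<le> \<psi>\<close>)
  finally show ?thesis using up unfolding \<psi>_def[symmetric] by (simp add: abs_le_iff algebra_simps)
qed

lemma quotient_distortion_bound:
  fixes iA jA iS mA mS a b K \<eta> :: real
  assumes pos: "0 < mA" "0 < mS" "0 \<le> iS" "0 < a" "0 < b" "1 \<le> a * b"
    and j: "jA \<le> a * iS" "iS \<le> b * jA" and m: "mA \<le> a * mS" "mS \<le> b * mA"
    and i: "\<bar>iA - jA\<bar> \<le> \<eta> * mA" and K: "iS \<le> K * mS"
  shows "\<bar>iA / mA - iS / mS\<bar> \<le> \<eta> + (a * b - 1) * K"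
proof -
  have "\<bar>jA / mA - iS / mS\<bar> \<le> (a * b - 1) * (iS / mS)"
    by (rule quotient_comparison[OF pos j m])
  also have "\<dots> \<le> (a * b - 1) * K"
    using pos K by (intro mult_left_mono) (auto simp: field_simps)
  finally have "\<bar>jA / mA - iS / mS\<bar> \<le> (a * b - 1) * K" .
  moreover have "\<bar>iA / mA - jA / mA\<bar> = \<bar>iA - jA\<bar> / mA"
    using pos by (metis abs_div_pos diff_divide_distrib)
  then have "\<bar>iA / mA - jA / mA\<bar> \<le> \<eta>" using i pos by (simp add: pos_divide_le_eq)
  ultimately show ?thesis by linarith
qed

lemma set_integrable_bounded_real:
  fixes f :: "'a \<Rightarrow> real"
  assumes "A \<in> sets M" "emeasure M A < \<infinity>" "set_borel_measurable M A f" "\<And>x. x \<in> A \<Longrightarrow> \<bar>f x\<bar> \<le> B"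
  shows "set_integrable M A f"
  unfolding set_integrable_def
  using assms by (intro integrableI_bounded_set[of A _ _ B]) (auto simp: set_borel_measurable_def)

lemma set_integral_bounded_nonneg:
  fixes f :: "'a \<Rightarrow> real"
  assumes A: "A \<in> sets M" "emeasure M A < \<infinity>" and f: "set_borel_measurable M A f"
    and bound: "\<And>x. x \<in> A \<Longrightarrow> 0 \<le> f x \<and> f x \<le> K"
  shows "set_integrable M A f" and "0 \<le> (LINT x:A|M. f x)" and "(LINT x:A|M. f x) \<le> K * measure M A"
    and "(\<integral>\<^sup>+x\<in>A. ennreal (f x) \<partial>M) = ennreal (LINT x:A|M. f x)"
proof -
  show int: "set_integrable M A f"
    using A f bound by (intro set_integrable_bounded_real[where B = K]) auto
  have "(LINT x:A|M. f x) \<le> (LINT x:A|M. K)"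
    using A bound by (intro set_integral_mono int)
      (auto intro!: set_integrable_bounded_real[where B = "\<bar>K\<bar>"] simp: set_borel_measurable_def)
  then show "(LINT x:A|M. f x) \<le> K * measure M A"
    using A by (simp add: set_integral_const mult.commute)
  show "0 \<le> (LINT x:A|M. f x)"
    using bound unfolding set_lebesgue_integral_def
    by (intro Bochner_Integration.integral_nonneg) (simp add: indicator_def)
  have "(\<integral>\<^sup>+x\<in>A. ennreal (f x) \<partial>M) = (\<integral>\<^sup>+x. ennreal (indicator A x *\<^sub>R f x) \<partial>M)"
    by (intro nn_integral_cong) (simp add: indicator_def)
  also have "\<dots> = ennreal (LINT x:A|M. f x)"
    unfolding set_lebesgue_integral_def using int bound
    by (intro nn_integral_eq_integral) (auto simp: set_integrable_def indicator_def)
  finally show "(\<integral>\<^sup>+x\<in>A. ennreal (f x) \<partial>M) = ennreal (LINT x:A|M. f x)" .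
qed

lemma set_integral_abs_diff_le:
  fixes f g :: "'a \<Rightarrow> real"
  assumes A: "A \<in> sets M" "emeasure M A < \<infinity>" and int: "set_integrable M A f" "set_integrable M A g"
    and close: "\<And>x. x \<in> A \<Longrightarrow> \<bar>f x - g x\<bar> \<le> \<eta>"
  shows "\<bar>(LINT x:A|M. f x) - (LINT x:A|M. g x)\<bar> \<le> \<eta> * measure M A"
proof -
  have \<eta>: "set_integrable M A (\<lambda>_. \<eta>)"
    using A by (auto intro!: set_integrable_bounded_real[where B = "\<bar>\<eta>\<bar>"] simp: set_borel_measurable_def)
  have "(LINT x:A|M. f x - g x) \<le> (LINT x:A|M. \<eta>)"
    by (rule set_integral_mono) (use close int \<eta> in \<open>auto simp: abs_le_iff\<close>)
  moreover have "(LINT x:A|M. g x - f x) \<le> (LINT x:A|M. \<eta>)"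
    by (rule set_integral_mono) (use close int \<eta> in \<open>auto simp: abs_le_iff\<close>)
  ultimately show ?thesis
    using int A by (simp add: set_integral_const abs_le_iff mult.commute)
qed

lemma set_average_distortion:
  fixes H :: "'a measure" and p :: "'a \<Rightarrow> 'a" and F G :: "'a \<Rightarrow> real"
  assumes sets: "A \<in> sets H" "S \<in> sets H" and pA: "p ` A \<subseteq> S"
    and ab: "0 < a" "0 < b" "1 \<le> a * b"
    and S_le: "emeasure H S \<le> ennreal b * emeasure H A"
    and A_le: "emeasure H A \<le> ennreal a * emeasure H S"
    and FS_le: "(\<integral>\<^sup>+v\<in>S. ennreal (F v) \<partial>H) \<le> ennreal b * (\<integral>\<^sup>+y\<in>A. ennreal (F (p y)) \<partial>H)"
    and FA_le: "(\<integral>\<^sup>+y\<in>A. ennreal (F (p y)) \<partial>H) \<le> ennreal a * (\<integral>\<^sup>+v\<in>S. ennreal (F v) \<partial>H)"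
    and meas: "set_borel_measurable H S F" "set_borel_measurable H A (\<lambda>y. F (p y))"
      "set_borel_measurable H A G"
    and F: "\<And>v. v \<in> S \<Longrightarrow> 0 \<le> F v \<and> F v \<le> K" and K: "0 \<le> K"
    and G: "\<And>y. y \<in> A \<Longrightarrow> \<bar>G y - F (p y)\<bar> \<le> \<eta>" and \<eta>: "0 \<le> \<eta>"
  shows "\<bar>(LINT y:A|H. G y) / measure H A - (LINT v:S|H. F v) / measure H S\<bar>
    \<le> \<eta> + (a * b - 1) * K"
proof (cases "emeasure H S = 0 \<or> emeasure H S = \<infinity>")
  case True
  then have "measure H A = 0 \<and> measure H S = 0"
    using A_le S_le by (auto simp: measure_def ennreal_mult_eq_top_iff top_unique)
  then show ?thesis using \<eta> K ab by simp
next
  case False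
  then have S_fin: "0 < emeasure H S" "emeasure H S < \<infinity>"
    by (auto simp: zero_less_iff_neq_zero less_top)
  have A_fin: "0 < emeasure H A" "emeasure H A < \<infinity>"
    using S_le A_le S_fin
    by (auto simp: zero_less_iff_neq_zero ennreal_mult_less_top intro: le_less_trans)
  have pS: "y \<in> A \<Longrightarrow> p y \<in> S" for y using pA by auto
  note intS = set_integral_bounded_nonneg[OF sets(2) S_fin(2) meas(1) F]
  note intJ = set_integral_bounded_nonneg[OF sets(1) A_fin(2) meas(2) F[OF pS]]
  have intG: "set_integrable H A G"
  proof (rule set_integrable_bounded_real[where B = "K + \<eta>"])
    show "\<bar>G y\<bar> \<le> K + \<eta>" if "y \<in> A" for y
      using G[OF that] F[OF pS[OF that]] by linarith
  qed (use sets A_fin meas in auto)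
  define iA jA iS mA mS where "iA = (LINT y:A|H. G y)" and "jA = (LINT y:A|H. F (p y))"
    and "iS = (LINT v:S|H. F v)" and "mA = measure H A" and "mS = measure H S"
  have measures: "emeasure H A = ennreal mA" "emeasure H S = ennreal mS" "0 < mA" "0 < mS"
    using A_fin S_fin by (auto simp: mA_def mS_def emeasure_eq_ennreal_measure)
  have "ennreal iS \<le> ennreal b * ennreal jA" "ennreal jA \<le> ennreal a * ennreal iS"
    using FS_le FA_le by (simp_all only: intS(4) intJ(4) iS_def jA_def)
  then have "jA \<le> a * iS" "iS \<le> b * jA" "mA \<le> a * mS" "mS \<le> b * mA"
    using S_le A_le ab intS(2) intJ(2) measures
    by (simp_all add: iS_def jA_def flip: ennreal_mult'')
  moreover have "\<bar>iA - jA\<bar> \<le> \<eta> * mA"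
    using set_integral_abs_diff_le[OF sets(1) A_fin(2) intG intJ(1) G] by (simp add: iA_def jA_def mA_def)
  moreover have "iS \<le> K * mS" using intS(3) by (simp add: iS_def mS_def)
  ultimately show ?thesis
    using quotient_distortion_bound[of mA mS iS a b jA iA \<eta> K] measures intS(2) ab
    by (simp add: iA_def iS_def mA_def mS_def)
qed

lemma hausdorff_nn_integral_bi_lipschitz:
  fixes s \<alpha> \<beta> :: real and p :: "'a::euclidean_space \<Rightarrow> 'a" and g :: "'a \<Rightarrow> ennreal"
  defines "H \<equiv> hausdorff_measure s :: 'a measure"
  assumes H: "measure_space UNIV (sets borel) (hausdorff_outer s :: 'a set \<Rightarrow> ennreal)"
    and s: "s \<ge> 0" and AS: "A \<in> sets borel" "S \<in> sets borel" "p ` A = S" and \<alpha>: "0 < \<alpha>" "\<alpha> \<le> \<beta>"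
    and lower: "\<And>a b. a \<in> A \<Longrightarrow> b \<in> A \<Longrightarrow> \<alpha> * dist a b \<le> dist (p a) (p b)"
    and upper: "\<beta>-lipschitz_on A p"
    and g: "g \<in> borel_measurable borel"
  shows "(\<integral>\<^sup>+v\<in>S. g v \<partial>H) \<le> ennreal (\<beta> powr s) * (\<integral>\<^sup>+y\<in>A. g (p y) \<partial>H)"
    and "(\<integral>\<^sup>+y\<in>A. g (p y) \<partial>H) \<le> ennreal ((1 / \<alpha>) powr s) * (\<integral>\<^sup>+v\<in>S. g v \<partial>H)"
proof -
  show "(\<integral>\<^sup>+v\<in>S. g v \<partial>H) \<le> ennreal (\<beta> powr s) * (\<integral>\<^sup>+y\<in>A. g (p y) \<partial>H)"
    unfolding H_def AS(3)[symmetric]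
    using H s upper \<alpha> AS g by (intro hausdorff_nn_integral_lipschitz_image) auto
  have inj: "inj_on p A"
  proof (rule inj_onI)
    fix a b assume "a \<in> A" "b \<in> A" "p a = p b"
    then show "a = b" using lower[of a b] \<alpha> by (simp add: mult_le_0_iff)
  qed
  define q where "q = inv_into A p"
  have q: "q ` S = A" "\<And>v. v \<in> S \<Longrightarrow> p (q v) = v"
    unfolding q_def AS(3)[symmetric] using inj by (auto simp: f_inv_into_f)
  have "(1 / \<alpha>)-lipschitz_on S q"
  proof (rule lipschitz_onI)
    fix u v assume "u \<in> S" "v \<in> S"
    then have "\<alpha> * dist (q u) (q v) \<le> dist u v"
      using lower[of "q u" "q v"] q by auto
    then show "dist (q u) (q v) \<le> 1 / \<alpha> * dist u v" using \<alpha> by (simp add: field_simps)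
  qed (use \<alpha> in simp)
  define p0 where "p0 y = (if y \<in> A then p y else 0)" for y
  have p0: "p0 \<in> borel_measurable borel"
    unfolding p0_def using upper AS(1) by (rule borel_measurable_extend_lipschitz)
  have "(\<integral>\<^sup>+y\<in>q ` S. g (p0 y) \<partial>H) \<le> ennreal ((1 / \<alpha>) powr s) * (\<integral>\<^sup>+v\<in>S. g (p0 (q v)) \<partial>H)"
    unfolding H_def using \<open>(1 / \<alpha>)-lipschitz_on S q\<close> H s \<alpha> AS q g p0
    by (intro hausdorff_nn_integral_lipschitz_image measurable_compose[OF _ g]) auto
  also have "(\<integral>\<^sup>+v\<in>S. g (p0 (q v)) \<partial>H) = (\<integral>\<^sup>+v\<in>S. g v \<partial>H)"
    using q by (intro nn_integral_cong) (auto simp: indicator_def p0_def)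
  also have "(\<integral>\<^sup>+y\<in>q ` S. g (p0 y) \<partial>H) = (\<integral>\<^sup>+y\<in>A. g (p y) \<partial>H)"
    unfolding q by (intro nn_integral_cong) (simp add: indicator_def p0_def)
  finally show "(\<integral>\<^sup>+y\<in>A. g (p y) \<partial>H) \<le> ennreal ((1 / \<alpha>) powr s) * (\<integral>\<^sup>+v\<in>S. g v \<partial>H)" .
qed

lemma hausdorff_average_bi_lipschitz:
  fixes s \<alpha> \<beta> \<eta> K :: real and p :: "'a::euclidean_space \<Rightarrow> 'a" and F G :: "'a \<Rightarrow> real"
  defines "H \<equiv> hausdorff_measure s :: 'a measure"
  assumes s: "s > 0" and AS: "closed A" "closed S" "p ` A = S" and \<alpha>: "0 < \<alpha>" "\<alpha> \<le> \<beta>"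
    and lower: "\<And>a b. a \<in> A \<Longrightarrow> b \<in> A \<Longrightarrow> \<alpha> * dist a b \<le> dist (p a) (p b)"
    and upper: "\<beta>-lipschitz_on A p"
    and F: "continuous_on UNIV F" "\<And>v. v \<in> S \<Longrightarrow> 0 \<le> F v \<and> F v \<le> K" and K: "0 \<le> K"
    and G: "continuous_on A G" "\<And>y. y \<in> A \<Longrightarrow> \<bar>G y - F (p y)\<bar> \<le> \<eta>" and \<eta>: "0 \<le> \<eta>"
  shows "\<bar>(LINT y:A|H. G y) / measure H A - (LINT v:S|H. F v) / measure H S\<bar>
    \<le> \<eta> + ((\<beta> / \<alpha>) powr s - 1) * K"
proof (cases "measure_space UNIV (sets borel) (hausdorff_outer s :: 'a set \<Rightarrow> ennreal)")
  case False
  \<comment> \<open>Then \<open>measure_of\<close> yields the zero measure and both averages vanish, so we never need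
    that the Hausdorff outer measure is countably additive on the Borel sets.\<close>
  have "1 \<le> (\<beta> / \<alpha>) powr s" using \<alpha> s by (intro ge_one_powr_ge_zero) auto
  then show ?thesis
    using measure_hausdorff_measure_degenerate[OF False] \<eta> K by (simp add: H_def)
next
  case True
  have AS_borel: "A \<in> sets borel" "S \<in> sets borel" using AS by auto
  have "(\<beta> / \<alpha>) powr s = (1 / \<alpha>) powr s * \<beta> powr s"
    using \<alpha> by (simp add: powr_mult[symmetric])
  moreover have "\<bar>(LINT y:A|H. G y) / measure H A - (LINT v:S|H. F v) / measure H S\<bar>
      \<le> \<eta> + ((1 / \<alpha>) powr s * \<beta> powr s - 1) * K"
  proof (rule set_average_distortion)
    show "1 \<le> (1 / \<alpha>) powr s * \<beta> powr s"
      using \<alpha> s by (simp add: powr_mult[symmetric] ge_one_powr_ge_zero)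
    have [measurable]: "F \<in> borel_measurable borel"
      using F(1) by (rule borel_measurable_continuous_onI)
    show "emeasure H S \<le> ennreal (\<beta> powr s) * emeasure H A"
         "emeasure H A \<le> ennreal ((1 / \<alpha>) powr s) * emeasure H S"
      using hausdorff_nn_integral_bi_lipschitz[OF True _ AS_borel AS(3) \<alpha> lower upper, of "\<lambda>_. 1"] s
        AS_borel by (simp_all add: H_def)
    show "(\<integral>\<^sup>+v\<in>S. ennreal (F v) \<partial>H) \<le> ennreal (\<beta> powr s) * (\<integral>\<^sup>+y\<in>A. ennreal (F (p y)) \<partial>H)"
         "(\<integral>\<^sup>+y\<in>A. ennreal (F (p y)) \<partial>H) \<le> ennreal ((1 / \<alpha>) powr s) * (\<integral>\<^sup>+v\<in>S. ennreal (F v) \<partial>H)"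
      using hausdorff_nn_integral_bi_lipschitz[OF True _ AS_borel AS(3) \<alpha> lower upper, of "\<lambda>v. ennreal (F v)"] s
      by (simp_all add: H_def)
    have set_meas: "set_borel_measurable H X f" if "X \<in> sets borel" "continuous_on X f"
      for X and f :: "'a \<Rightarrow> real"
      unfolding set_borel_measurable_def H_def measurable_cong_sets[OF sets_hausdorff_measure refl]
      using that by (rule borel_measurable_continuous_on_indicator)
    show "set_borel_measurable H S F" "set_borel_measurable H A G"
      using AS_borel continuous_on_subset[OF F(1)] G(1) by (auto intro: set_meas)
    show "set_borel_measurable H A (\<lambda>y. F (p y))"
      using AS_borel continuous_on_compose2[OF F(1) lipschitz_on_continuous_on[OF upper]]
      by (auto intro: set_meas)
  qed (use \<alpha> AS_borel AS F K G \<eta> in \<open>auto simp: H_def\<close>)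
  ultimately show ?thesis by simp
qed

lemma norm_scaleR_sgn [simp]: "norm x *\<^sub>R sgn x = (x :: 'a::real_normed_vector)"
  by (cases "x = 0") (simp_all add: sgn_div_norm)

lemma norm_sgn_diff_bounds:
  fixes a b :: "'a::real_normed_vector"
  shows "norm a * norm (sgn a - sgn b) \<le> norm (a - b) + \<bar>norm a - norm b\<bar>"
    and "norm (a - b) - \<bar>norm a - norm b\<bar> \<le> norm a * norm (sgn a - sgn b)"
proof -
  have sc: "norm a *\<^sub>R (sgn a - sgn b) = (a - b) - (norm a - norm b) *\<^sub>R sgn b"
    by (simp add: scaleR_diff_right scaleR_diff_left)
  have eq: "norm a * norm (sgn a - sgn b) = norm ((a - b) - (norm a - norm b) *\<^sub>R sgn b)"
    using arg_cong[OF sc, of norm] by simp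
  have "norm ((norm a - norm b) *\<^sub>R sgn b) \<le> \<bar>norm a - norm b\<bar>"
    by (simp add: norm_sgn mult_le_cancel_left1)
  then show "norm a * norm (sgn a - sgn b) \<le> norm (a - b) + \<bar>norm a - norm b\<bar>"
    "norm (a - b) - \<bar>norm a - norm b\<bar> \<le> norm a * norm (sgn a - sgn b)"
    unfolding eq using norm_triangle_ineq4[of "a - b" "(norm a - norm b) *\<^sub>R sgn b"]
      norm_triangle_ineq2[of "a - b" "(norm a - norm b) *\<^sub>R sgn b"] by linarith+
qed

definition proj_perp :: "'a::real_inner \<Rightarrow> 'a \<Rightarrow> 'a" where
  "proj_perp \<nu> d = d - (\<nu> \<bullet> d) *\<^sub>R \<nu>"

definition slope_bounded :: "'a::real_inner \<Rightarrow> real \<Rightarrow> 'a set \<Rightarrow> bool" where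
  "slope_bounded \<nu> \<eta> Y \<longleftrightarrow>
     (\<forall>y1\<in>Y. \<forall>y2\<in>Y. \<bar>\<nu> \<bullet> (y1 - y2)\<bar> \<le> \<eta> * norm (proj_perp \<nu> (y1 - y2)))"

lemma proj_perp_diff: "proj_perp \<nu> (a - b) = proj_perp \<nu> a - proj_perp \<nu> b"
  by (simp add: proj_perp_def algebra_simps)

context
  fixes \<nu> :: "'a::real_inner"
  assumes \<nu>: "norm \<nu> = 1"
begin

lemma inner_unit_self: "\<nu> \<bullet> \<nu> = 1"
  using \<nu> by (simp add: dot_square_norm)

lemma inner_proj_perp: "\<nu> \<bullet> proj_perp \<nu> d = 0"
  by (simp add: proj_perp_def inner_diff_right inner_unit_self)

lemma norm_proj_perp_pythagoras: "(norm d)\<^sup>2 = (norm (proj_perp \<nu> d))\<^sup>2 + (\<nu> \<bullet> d)\<^sup>2"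
proof -
  have "d = proj_perp \<nu> d + (\<nu> \<bullet> d) *\<^sub>R \<nu>" by (simp add: proj_perp_def)
  moreover have "proj_perp \<nu> d \<bullet> ((\<nu> \<bullet> d) *\<^sub>R \<nu>) = 0"
    using inner_proj_perp by (simp add: inner_commute)
  then have "(norm (proj_perp \<nu> d + (\<nu> \<bullet> d) *\<^sub>R \<nu>))\<^sup>2
      = (norm (proj_perp \<nu> d))\<^sup>2 + (norm ((\<nu> \<bullet> d) *\<^sub>R \<nu>))\<^sup>2"
    by (intro norm_add_Pythagorean) (simp add: orthogonal_def)
  ultimately show ?thesis
    using \<nu> by (simp add: power_mult_distrib)
qed

lemma norm_proj_perp_le: "norm (proj_perp \<nu> d) \<le> norm d"
proof (rule power2_le_imp_le)
  show "(norm (proj_perp \<nu> d))\<^sup>2 \<le> (norm d)\<^sup>2"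
    using norm_proj_perp_pythagoras[of d] zero_le_power2[of "\<nu> \<bullet> d"] by linarith
qed simp

lemma norm_le_proj_perp: "norm d \<le> norm (proj_perp \<nu> d) + \<bar>\<nu> \<bullet> d\<bar>"
  using norm_triangle_ineq[of "proj_perp \<nu> d" "(\<nu> \<bullet> d) *\<^sub>R \<nu>"] \<nu> by (simp add: proj_perp_def)

lemma norm_le_proj_perp_slope:
  assumes "0 \<le> \<eta>" "\<bar>\<nu> \<bullet> d\<bar> \<le> \<eta> * norm (proj_perp \<nu> d)"
  shows "norm d \<le> (1 + \<eta>) * norm (proj_perp \<nu> d)"
  using norm_le_proj_perp[of d] assms by (simp add: algebra_simps)

lemma sgn_proj_perp_approx:
  assumes \<eta>: "0 \<le> \<eta>" and slope: "\<bar>\<nu> \<bullet> d\<bar> \<le> \<eta> * norm (proj_perp \<nu> d)"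
  shows "norm (sgn d - sgn (proj_perp \<nu> d)) \<le> 2 * \<eta>"
proof (cases "d = 0")
  case True
  then show ?thesis using \<eta> by (simp add: proj_perp_def)
next
  case False
  define w where "w = proj_perp \<nu> d"
  have "norm (d - w) = \<bar>\<nu> \<bullet> d\<bar>"
    using \<nu> by (simp add: w_def proj_perp_def)
  also have "\<dots> \<le> \<eta> * norm d"
    using slope norm_proj_perp_le[of d] \<eta> unfolding w_def by (meson mult_left_mono order.trans)
  finally have dw: "norm (d - w) \<le> \<eta> * norm d" .
  have "norm d * norm (sgn d - sgn w) \<le> norm (d - w) + \<bar>norm d - norm w\<bar>"
    by (rule norm_sgn_diff_bounds(1))
  also have "\<dots> \<le> 2 * (\<eta> * norm d)"
    using dw norm_triangle_ineq3[of d w] by linarith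
  also have "\<dots> = norm d * (2 * \<eta>)" by simp
  finally show ?thesis
    using False unfolding w_def by simp
qed

lemma norm_proj_perp_diff_le:
  assumes \<eta>: "0 \<le> \<eta>" and r: "norm d1 = norm d2"
    and t1: "\<bar>\<nu> \<bullet> d1\<bar> \<le> \<eta> * norm (proj_perp \<nu> d1)"
    and t2: "\<bar>\<nu> \<bullet> d2\<bar> \<le> \<eta> * norm (proj_perp \<nu> d2)"
    and t12: "\<bar>\<nu> \<bullet> (d1 - d2)\<bar> \<le> \<eta> * norm (proj_perp \<nu> (d1 - d2))"
  shows "\<bar>norm (proj_perp \<nu> d1) - norm (proj_perp \<nu> d2)\<bar> \<le> \<eta>\<^sup>2 * norm (proj_perp \<nu> (d1 - d2))"
proof -
  define a1 a2 s1 s2 W where "a1 = norm (proj_perp \<nu> d1)" and "a2 = norm (proj_perp \<nu> d2)"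
    and "s1 = \<nu> \<bullet> d1" and "s2 = \<nu> \<bullet> d2" and "W = norm (proj_perp \<nu> (d1 - d2))"
  have "a1\<^sup>2 + s1\<^sup>2 = a2\<^sup>2 + s2\<^sup>2"
    using norm_proj_perp_pythagoras[of d1] norm_proj_perp_pythagoras[of d2] r
    unfolding a1_def a2_def s1_def s2_def by simp
  then have "(a1 - a2) * (a1 + a2) = (s2 - s1) * (s2 + s1)"
    by (simp add: algebra_simps power2_eq_square)
  then have "\<bar>a1 - a2\<bar> * (a1 + a2) = \<bar>s1 - s2\<bar> * \<bar>s1 + s2\<bar>"
    by (metis abs_mult abs_minus_commute abs_of_nonneg add_nonneg_nonneg norm_ge_zero a1_def a2_def
        add.commute)
  also have "\<dots> \<le> (\<eta> * W) * (\<eta> * (a1 + a2))"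
  proof (rule mult_mono)
    show "\<bar>s1 - s2\<bar> \<le> \<eta> * W" using t12 unfolding s1_def s2_def W_def by (simp add: inner_diff_right)
    show "\<bar>s1 + s2\<bar> \<le> \<eta> * (a1 + a2)"
      using t1 t2 unfolding s1_def s2_def a1_def a2_def by (simp add: algebra_simps abs_triangle_ineq4)
  qed (use \<eta> W_def in auto)
  finally have "\<bar>a1 - a2\<bar> * (a1 + a2) \<le> (\<eta>\<^sup>2 * W) * (a1 + a2)"
    by (simp add: power2_eq_square algebra_simps)
  moreover have "0 \<le> a1" "0 \<le> a2" "0 \<le> \<eta>\<^sup>2 * W" unfolding a1_def a2_def W_def by simp_all
  ultimately show ?thesis
    unfolding a1_def[symmetric] a2_def[symmetric] W_def[symmetric]
    by (cases "a1 + a2 = 0") (auto simp: mult_le_cancel_right)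
qed

lemma sgn_proj_perp_bi_lipschitz:
  assumes \<eta>: "0 \<le> \<eta>" "\<eta> \<le> 1" and \<epsilon>: "0 < \<epsilon>" and r: "norm d1 = \<epsilon>" "norm d2 = \<epsilon>"
    and t1: "\<bar>\<nu> \<bullet> d1\<bar> \<le> \<eta> * norm (proj_perp \<nu> d1)"
    and t2: "\<bar>\<nu> \<bullet> d2\<bar> \<le> \<eta> * norm (proj_perp \<nu> d2)"
    and t12: "\<bar>\<nu> \<bullet> (d1 - d2)\<bar> \<le> \<eta> * norm (proj_perp \<nu> (d1 - d2))"
  shows "(1 - \<eta>) / \<epsilon> * norm (d1 - d2) \<le> norm (sgn (proj_perp \<nu> d1) - sgn (proj_perp \<nu> d2))"
    and "norm (sgn (proj_perp \<nu> d1) - sgn (proj_perp \<nu> d2)) \<le> (1 + \<eta>)\<^sup>2 / \<epsilon> * norm (d1 - d2)"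
proof -
  define w1 w2 where "w1 = proj_perp \<nu> d1" and "w2 = proj_perp \<nu> d2"
  define X where "X = norm (sgn w1 - sgn w2)"
  have a1: "\<epsilon> \<le> (1 + \<eta>) * norm w1" "norm w1 \<le> \<epsilon>"
    using norm_le_proj_perp_slope[OF \<eta>(1) t1] norm_proj_perp_le[of d1] unfolding w1_def r by simp_all
  then have "norm w1 \<noteq> 0" using \<epsilon> by auto
  then have a1_pos: "0 < norm w1" by simp
  have W: "norm (w1 - w2) \<le> norm (d1 - d2)" "norm (d1 - d2) \<le> (1 + \<eta>) * norm (w1 - w2)"
    using norm_proj_perp_le[of "d1 - d2"] norm_le_proj_perp_slope[OF \<eta>(1) t12]
    unfolding w1_def w2_def proj_perp_diff by auto
  have aa: "\<bar>norm w1 - norm w2\<bar> \<le> \<eta>\<^sup>2 * norm (w1 - w2)"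
    using norm_proj_perp_diff_le[OF \<eta>(1) _ t1 t2 t12] r unfolding w1_def w2_def proj_perp_diff by simp
  have \<eta>2: "\<eta>\<^sup>2 \<le> \<eta>" using \<eta> by (simp add: power2_eq_square mult_left_le)
  have "norm w1 * X \<le> (1 + \<eta>\<^sup>2) * norm (w1 - w2)"
    using norm_sgn_diff_bounds(1)[of w1 w2] aa unfolding X_def by (simp add: algebra_simps)
  also have "\<dots> \<le> (1 + \<eta>) * norm (d1 - d2)"
    using \<eta>2 W(1) \<eta> by (intro mult_mono) auto
  finally have "X \<le> (1 + \<eta>) * norm (d1 - d2) / norm w1"
    using a1_pos by (simp add: field_simps)
  also have "\<dots> \<le> (1 + \<eta>) * norm (d1 - d2) * ((1 + \<eta>) / \<epsilon>)"
    using a1 a1_pos \<epsilon> \<eta> by (simp add: divide_inverse, intro mult_left_mono) (auto simp: field_simps)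
  finally show "X \<le> (1 + \<eta>)\<^sup>2 / \<epsilon> * norm (d1 - d2)"
    by (simp add: power2_eq_square field_simps)
  have "(1 - \<eta>) * norm (d1 - d2) \<le> (1 - \<eta>) * ((1 + \<eta>) * norm (w1 - w2))"
    using W(2) \<eta> by (intro mult_left_mono) auto
  also have "\<dots> = (1 - \<eta>\<^sup>2) * norm (w1 - w2)" by (simp add: power2_eq_square algebra_simps)
  also have "\<dots> \<le> norm w1 * X"
    using norm_sgn_diff_bounds(2)[of w1 w2] aa unfolding X_def by (simp add: algebra_simps)
  also have "\<dots> \<le> \<epsilon> * X" using a1 unfolding X_def by (intro mult_right_mono) auto
  finally show "(1 - \<eta>) / \<epsilon> * norm (d1 - d2) \<le> X"
    using \<epsilon> by (simp add: field_simps)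
qed

end

lemma smooth_on_derivative:
  assumes "smooth_on U f"
  shows "open U" and "\<And>y. y \<in> U \<Longrightarrow> (f has_derivative frechet_derivative f (at y)) (at y)"
    and "\<And>v. continuous_on U (\<lambda>y. frechet_derivative f (at y) v)"
proof -
  show U: "open U" using assms unfolding smooth_on_def by simp
  have "iter_dd [] f differentiable_on U" "\<And>v. iter_dd [v] f differentiable_on U"
    using assms unfolding smooth_on_def by blast+
  then show "(f has_derivative frechet_derivative f (at y)) (at y)" if "y \<in> U" for y
    using U that by (simp add: differentiable_on_eq_differentiable_at frechet_derivative_works[symmetric])
  show "continuous_on U (\<lambda>y. frechet_derivative f (at y) v)" for v
    using \<open>\<And>v. iter_dd [v] f differentiable_on U\<close>[of v] by (simp add: differentiable_imp_continuous_on)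
qed

lemma smooth_on_subset_differentiable:
  assumes n: "smooth_on_subset (M \<inter> V) n" and V: "open V"
  shows "continuous_on (M \<inter> V) n" and "\<And>p. p \<in> M \<inter> V \<Longrightarrow> n differentiable (at p within M)"
proof -
  have extension: "\<exists>F F' d. (F has_derivative F') (at p) \<and> d > 0 \<and> (\<forall>y\<in>M. dist y p < d \<longrightarrow> F y = n y)"
    if p: "p \<in> M \<inter> V" for p
  proof -
    obtain U F where UF: "p \<in> U" "smooth_on U F" "\<forall>y\<in>M \<inter> V \<inter> U. F y = n y"
      using n p unfolding smooth_on_subset_def by blast
    have "open (U \<inter> V)" using smooth_on_derivative(1)[OF UF(2)] V by blast
    then obtain d where "d > 0" "ball p d \<subseteq> U \<inter> V"
      using UF(1) p by (meson IntI IntD2 open_contains_ball)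
    then show ?thesis
      using smooth_on_derivative(2)[OF UF(2) UF(1)] UF(3) by (auto simp: dist_commute subset_iff)
  qed
  show "n differentiable (at p within M)" if p: "p \<in> M \<inter> V" for p
  proof -
    obtain F F' d where F: "(F has_derivative F') (at p)" "d > 0" "\<forall>y\<in>M. dist y p < d \<longrightarrow> F y = n y"
      using extension[OF p] by blast
    have "(F has_derivative F') (at p within M)"
      using F(1) has_derivative_at_withinI by blast
    then have "(n has_derivative F') (at p within M)"
      by (rule has_derivative_transform_within[OF _ F(2)]) (use p F(3) in auto)
    then show ?thesis unfolding differentiable_def by blast
  qed
  show "continuous_on (M \<inter> V) n"
    unfolding continuous_on_eq_continuous_within
  proof
    fix p assume p: "p \<in> M \<inter> V"
    obtain F F' d where F: "(F has_derivative F') (at p)" "d > 0" "\<forall>y\<in>M. dist y p < d \<longrightarrow> F y = n y"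
      using extension[OF p] by blast
    have "continuous (at p within M \<inter> V) F"
      using F(1) has_derivative_continuous continuous_at_imp_continuous_at_within by blast
    then show "continuous (at p within M \<inter> V) n"
      by (rule continuous_transform_within[OF _ F(2) p]) (use F(3) in auto)
  qed
qed

lemma onorm_derivative_diff_small:
  fixes Df :: "'a::euclidean_space \<Rightarrow> 'a \<Rightarrow> 'b::real_normed_vector"
  assumes U: "open U" "x \<in> U" and lin: "\<And>y. y \<in> U \<Longrightarrow> bounded_linear (Df y)"
    and Df: "\<And>v. continuous_on U (\<lambda>y. Df y v)" and \<delta>: "\<delta> > 0"
  shows "\<exists>\<rho>>0. ball x \<rho> \<subseteq> U \<and> (\<forall>z\<in>ball x \<rho>. onorm (Df z - Df x) \<le> \<delta>)"
proof -
  define N where "N = real DIM('a)"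
  have "\<forall>b\<in>Basis. \<exists>r>0. \<forall>z. dist z x < r \<longrightarrow> norm (Df z b - Df x b) < \<delta> / N"
  proof
    fix b :: 'a assume "b \<in> Basis"
    have "isCont (\<lambda>y. Df y b) x" using Df[of b] U continuous_on_eq_continuous_at by blast
    moreover have "\<delta> / N > 0" using \<delta> by (simp add: N_def)
    ultimately show "\<exists>r>0. \<forall>z. dist z x < r \<longrightarrow> norm (Df z b - Df x b) < \<delta> / N"
      unfolding continuous_at_eps_delta by (simp add: dist_norm)
  qed
  then obtain r where r: "\<And>b. b \<in> Basis \<Longrightarrow> r b > 0 \<and> (\<forall>z. dist z x < r b \<longrightarrow> norm (Df z b - Df x b) < \<delta> / N)"
    by metis
  obtain rU where rU: "rU > 0" "ball x rU \<subseteq> U" using U open_contains_ball by blast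
  define \<rho> where "\<rho> = min rU (Min (r ` Basis))"
  have \<rho>: "\<rho> > 0" "ball x \<rho> \<subseteq> U" "\<And>b. b \<in> Basis \<Longrightarrow> \<rho> \<le> r b"
    unfolding \<rho>_def using r rU by (auto intro: min.coboundedI2 Min_le)
  have "onorm (Df z - Df x) \<le> \<delta>" if z: "z \<in> ball x \<rho>" for z
  proof -
    have "bounded_linear (Df z - Df x)"
      unfolding fun_diff_def using lin z \<rho>(2) U(2) by (intro bounded_linear_sub) auto
    then have "onorm (Df z - Df x) \<le> (\<Sum>b\<in>Basis. norm (Df z b - Df x b))"
      by (rule onorm_componentwise[THEN order_trans]) simp
    also have "\<dots> \<le> (\<Sum>b\<in>(Basis::'a set). \<delta> / N)"
    proof (intro sum_mono less_imp_le)
      fix b :: 'a assume b: "b \<in> Basis"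
      then have "dist z x < r b" using z \<rho>(3)[OF b] by (simp add: dist_commute)
      then show "norm (Df z b - Df x b) < \<delta> / N" using r[OF b] by blast
    qed
    finally show ?thesis by (simp add: N_def)
  qed
  then show ?thesis using \<rho> by blast
qed

lemma uniform_linearization:
  fixes f :: "'a::euclidean_space \<Rightarrow> 'b::real_normed_vector"
  assumes U: "open U" "x \<in> U" and f: "\<And>y. y \<in> U \<Longrightarrow> (f has_derivative Df y) (at y)"
    and Df: "\<And>v. continuous_on U (\<lambda>y. Df y v)" and \<delta>: "\<delta> > 0"
  shows "\<exists>r>0. ball x r \<subseteq> U \<and>
    (\<forall>p\<in>ball x r. \<forall>q\<in>ball x r. norm (f p - f q - Df x (p - q)) \<le> \<delta> * norm (p - q))"
proof -
  have "bounded_linear (Df y)" if "y \<in> U" for y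
    using f[OF that] by (rule has_derivative_bounded_linear)
  then obtain \<rho> where \<rho>: "\<rho> > 0" "ball x \<rho> \<subseteq> U"
    and onorm_bound: "\<And>z. z \<in> ball x \<rho> \<Longrightarrow> onorm (Df z - Df x) \<le> \<delta>"
    using onorm_derivative_diff_small[where Df = Df, OF U _ Df \<delta>] by blast
  have deriv: "(f has_derivative Df z) (at z within ball x \<rho>)" if "z \<in> ball x \<rho>" for z
    using f that \<rho>(2) has_derivative_at_withinI by blast
  have segment: "q + t *\<^sub>R (p - q) \<in> ball x \<rho>"
    if "p \<in> ball x \<rho>" "q \<in> ball x \<rho>" "t \<in> {0..1}" for p q t
  proof -
    have "q + t *\<^sub>R (p - q) = (1 - t) *\<^sub>R q + t *\<^sub>R p" by (simp add: algebra_simps)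
    then show ?thesis using that by (metis atLeastAtMost_iff convex_alt convex_ball)
  qed
  have "norm (f p - f q - Df x (p - q)) \<le> norm (p - q) * \<delta>"
    if "p \<in> ball x \<rho>" "q \<in> ball x \<rho>" for p q
    by (rule differentiable_bound_linearization[where S = "ball x \<rho>"])
      (use that \<rho>(1) segment deriv onorm_bound in auto)
  then show ?thesis using \<rho> by (metis mult.commute)
qed

lemma slope_of_linearization:
  fixes \<nu> d :: "'a::real_inner"
  assumes \<nu>: "norm \<nu> = 1" and a: "0 < a" "\<delta> < a" and \<delta>: "0 \<le> \<delta>" "\<delta> * (1 + \<eta>) \<le> a * \<eta>"
    and lin: "a * \<bar>\<nu> \<bullet> d\<bar> \<le> \<delta> * norm d"
  shows "\<bar>\<nu> \<bullet> d\<bar> \<le> \<eta> * norm (proj_perp \<nu> d)"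
proof -
  have "a * \<bar>\<nu> \<bullet> d\<bar> \<le> \<delta> * (norm (proj_perp \<nu> d) + \<bar>\<nu> \<bullet> d\<bar>)"
    using lin norm_le_proj_perp[OF \<nu>, of d] \<delta>(1) by (meson mult_left_mono order.trans)
  then have "(a - \<delta>) * \<bar>\<nu> \<bullet> d\<bar> \<le> \<delta> * norm (proj_perp \<nu> d)"
    by (simp add: algebra_simps)
  also have "\<dots> \<le> ((a - \<delta>) * \<eta>) * norm (proj_perp \<nu> d)"
    using \<delta>(2) by (intro mult_right_mono) (auto simp: algebra_simps)
  finally show ?thesis using a by (simp add: mult.assoc)
qed

lemma zero_on_normal_line:
  fixes f :: "'a::real_inner \<Rightarrow> real"
  assumes f: "continuous_on (ball x \<rho>) f" and \<nu>: "norm \<nu> = 1" and a: "0 < a" "\<delta> \<le> a / 2"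
    and lin: "\<And>p. p \<in> ball x \<rho> \<Longrightarrow> \<bar>f p - a * (\<nu> \<bullet> (p - x))\<bar> \<le> \<delta> * norm (p - x)"
    and w: "\<nu> \<bullet> w = 0" "norm w \<le> \<rho> / 3" and \<rho>: "0 < \<rho>"
  shows "\<exists>t. \<bar>t\<bar> \<le> \<rho> / 3 \<and> x + w + t *\<^sub>R \<nu> \<in> ball x \<rho> \<and> f (x + w + t *\<^sub>R \<nu>) = 0"
proof -
  define \<phi> where "\<phi> t = f (x + w + t *\<^sub>R \<nu>)" for t
  have norm_le: "norm (w + t *\<^sub>R \<nu>) \<le> 2 * \<rho> / 3" if "\<bar>t\<bar> \<le> \<rho> / 3" for t
    using norm_triangle_ineq[of w "t *\<^sub>R \<nu>"] \<nu> w that by simp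
  have in_ball: "x + w + t *\<^sub>R \<nu> \<in> ball x \<rho>" if "\<bar>t\<bar> \<le> \<rho> / 3" for t
  proof -
    have "dist x (x + w + t *\<^sub>R \<nu>) = norm (w + t *\<^sub>R \<nu>)"
      by (metis add.assoc add_diff_cancel_left' dist_commute dist_norm)
    then show ?thesis using norm_le[OF that] \<rho> by simp
  qed
  have approx: "\<bar>\<phi> t - a * t\<bar> \<le> a * (\<rho> / 3)" if t: "\<bar>t\<bar> \<le> \<rho> / 3" for t
  proof -
    have "\<nu> \<bullet> (w + t *\<^sub>R \<nu>) = t" using w \<nu> by (simp add: inner_add_right dot_square_norm)
    then have "\<bar>\<phi> t - a * t\<bar> \<le> \<delta> * norm (w + t *\<^sub>R \<nu>)"
      using lin[OF in_ball[OF t]] by (simp add: \<phi>_def add.assoc)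
    also have "\<dots> \<le> (a / 2) * (2 * \<rho> / 3)"
      using a norm_le[OF t] \<rho> by (intro mult_mono) auto
    finally show ?thesis by simp
  qed
  have "a * (- \<rho> / 3) = - (a * (\<rho> / 3))" by simp
  then have "\<phi> (- \<rho> / 3) \<le> 0" "0 \<le> \<phi> (\<rho> / 3)"
    using abs_le_D1[OF approx[of "- \<rho> / 3"]] abs_le_D2[OF approx[of "\<rho> / 3"]] \<rho> by auto
  moreover have "continuous_on {- \<rho> / 3..\<rho> / 3} \<phi>"
    unfolding \<phi>_def using in_ball by (intro continuous_on_compose2[OF f] continuous_intros) auto
  ultimately obtain t where "- \<rho> / 3 \<le> t" "t \<le> \<rho> / 3" "\<phi> t = 0"
    using IVT'[of \<phi> "- \<rho> / 3" 0 "\<rho> / 3"] \<rho> by auto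
  then show ?thesis using in_ball[of t] unfolding \<phi>_def by (intro exI[of _ t]) auto
qed

text \<open>Near \<open>x\<close>, \<open>M\<close> is the graph over the hyperplane \<open>\<nu>\<^sup>\<bottom>\<close> of a function whose Lipschitz
  constant on small balls tends to \<open>0\<close>.\<close>

definition flat_graph_at :: "'a::real_inner set \<Rightarrow> 'a \<Rightarrow> 'a \<Rightarrow> bool" where
  "flat_graph_at M x \<nu> \<longleftrightarrow> (\<forall>\<eta>>0. \<exists>\<rho>>0. slope_bounded \<nu> \<eta> (M \<inter> ball x \<rho>) \<and>
     (\<forall>w. \<nu> \<bullet> w = 0 \<longrightarrow> norm w \<le> \<rho> / 3 \<longrightarrow> (\<exists>t. \<bar>t\<bar> \<le> \<rho> / 3 \<and> x + w + t *\<^sub>R \<nu> \<in> M)))"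

lemma regular_level_set_flat_graph:
  fixes f :: "'a::euclidean_space \<Rightarrow> real"
  assumes U: "open U" "x \<in> U" and f: "\<And>y. y \<in> U \<Longrightarrow> (f has_derivative Df y) (at y)"
    and Df: "\<And>v. continuous_on U (\<lambda>y. Df y v)" and g: "\<And>v. Df x v = g \<bullet> v" "g \<noteq> 0"
    and M: "M \<inter> U = {y \<in> U. f y = 0}" "x \<in> M"
  shows "flat_graph_at M x (sgn g)"
  unfolding flat_graph_at_def
proof (intro allI impI)
  fix \<eta> :: real assume \<eta>: "\<eta> > 0"
  define a \<nu> where "a = norm g" and "\<nu> = sgn g"
  have a: "0 < a" and \<nu>: "norm \<nu> = 1" and g_eq: "g = a *\<^sub>R \<nu>"
    using g(2) by (simp_all add: a_def \<nu>_def norm_sgn)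
  define \<delta> where "\<delta> = a * \<eta> / (2 * (1 + \<eta>))"
  have \<delta>: "0 < \<delta>" "\<delta> \<le> a / 2" "\<delta> * (1 + \<eta>) \<le> a * \<eta>"
    using a \<eta> by (auto simp: \<delta>_def field_simps)
  obtain \<rho> where \<rho>: "\<rho> > 0" "ball x \<rho> \<subseteq> U"
    and lin: "\<And>p q. p \<in> ball x \<rho> \<Longrightarrow> q \<in> ball x \<rho> \<Longrightarrow> \<bar>f p - f q - g \<bullet> (p - q)\<bar> \<le> \<delta> * norm (p - q)"
    using uniform_linearization[OF U f Df \<delta>(1)] by (auto simp: g(1))
  have zero: "y \<in> M \<inter> ball x \<rho> \<Longrightarrow> f y = 0" for y using M \<rho>(2) by auto
  have "slope_bounded \<nu> \<eta> (M \<inter> ball x \<rho>)"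
    unfolding slope_bounded_def
  proof (intro ballI)
    fix y1 y2 assume "y1 \<in> M \<inter> ball x \<rho>" "y2 \<in> M \<inter> ball x \<rho>"
    then have lin_y: "a * \<bar>\<nu> \<bullet> (y1 - y2)\<bar> \<le> \<delta> * norm (y1 - y2)"
      using lin[of y1 y2] zero a by (simp add: g_eq abs_mult)
    show "\<bar>\<nu> \<bullet> (y1 - y2)\<bar> \<le> \<eta> * norm (proj_perp \<nu> (y1 - y2))"
      by (rule slope_of_linearization[OF \<nu> a _ _ _ lin_y]) (use \<delta> a in auto)
  qed
  moreover have "\<exists>t. \<bar>t\<bar> \<le> \<rho> / 3 \<and> x + w + t *\<^sub>R \<nu> \<in> M" if w: "\<nu> \<bullet> w = 0" "norm w \<le> \<rho> / 3" for w
  proof -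
    have "continuous_on (ball x \<rho>) f"
      using f \<rho>(2) by (meson continuous_at_imp_continuous_on has_derivative_continuous subsetD)
    then obtain t where t: "\<bar>t\<bar> \<le> \<rho> / 3" "x + w + t *\<^sub>R \<nu> \<in> ball x \<rho>" "f (x + w + t *\<^sub>R \<nu>) = 0"
      using zero_on_normal_line[OF _ \<nu> a \<delta>(2) _ w \<rho>(1)] lin[of _ x] zero[of x] \<rho>(1) M(2)
      by (fastforce simp: g_eq)
    then show ?thesis using M(1) \<rho>(2) by blast
  qed
  ultimately show "\<exists>\<rho>>0. slope_bounded (sgn g) \<eta> (M \<inter> ball x \<rho>) \<and>
      (\<forall>w. sgn g \<bullet> w = 0 \<longrightarrow> norm w \<le> \<rho> / 3 \<longrightarrow> (\<exists>t. \<bar>t\<bar> \<le> \<rho> / 3 \<and> x + w + t *\<^sub>R sgn g \<in> M))"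
    using \<rho>(1) unfolding \<nu>_def by blast
qed

lemma tangent_space_level_set_kernel:
  fixes f :: "'a::euclidean_space \<Rightarrow> 'b::real_normed_vector"
  assumes U: "open U" "x \<in> U" and f: "(f has_derivative Df) (at x)"
    and M: "M \<inter> U = {y \<in> U. f y = 0}" and v: "v \<in> tangent_space M x"
  shows "Df v = 0"
proof -
  obtain \<gamma> e where \<gamma>: "e > 0" "\<forall>t\<in>{-e<..<e}. \<gamma> t \<in> M" "\<gamma> 0 = x" "(\<gamma> has_vector_derivative v) (at 0)"
    using v unfolding tangent_space_def by blast
  obtain rU where rU: "rU > 0" "ball x rU \<subseteq> U" using U open_contains_ball by blast
  obtain d where d: "d > 0" "\<forall>t. dist t 0 < d \<longrightarrow> dist (\<gamma> t) (\<gamma> 0) < rU"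
    using has_vector_derivative_continuous[OF \<gamma>(4)] rU(1) unfolding continuous_at_eps_delta by blast
  have zero: "(f \<circ> \<gamma>) t = 0" if "t \<in> ball 0 (min d e)" for t
  proof -
    have "\<gamma> t \<in> U" using d that \<gamma>(3) rU(2) by (auto simp: dist_commute subset_iff)
    moreover have "\<gamma> t \<in> M" using \<gamma>(2) that by (auto simp: dist_norm abs_less_iff)
    ultimately show ?thesis using M by auto
  qed
  have "((f \<circ> \<gamma>) has_derivative (Df \<circ> (\<lambda>h. h *\<^sub>R v))) (at 0)"
    using \<gamma>(3,4) f by (intro diff_chain_at) (simp_all add: has_vector_derivative_def)
  moreover have "((f \<circ> \<gamma>) has_derivative (\<lambda>_. 0)) (at 0)"
    by (rule has_derivative_transform_within_open[of "\<lambda>_. 0" _ _ UNIV "ball 0 (min d e)"])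
      (use zero d \<gamma>(1) in auto)
  ultimately have "Df \<circ> (\<lambda>h. h *\<^sub>R v) = (\<lambda>_. 0)" by (rule has_derivative_unique)
  then show ?thesis by (metis comp_apply scaleR_one)
qed

lemma inner_normal_proj_perp_shift:
  fixes \<nu> w :: "'a::real_inner"
  assumes "norm \<nu> = 1" "\<nu> \<bullet> w = 0"
  shows "\<nu> \<bullet> (w + t *\<^sub>R \<nu>) = t" and "proj_perp \<nu> (w + t *\<^sub>R \<nu>) = w"
  using assms by (simp_all add: proj_perp_def inner_add_right inner_unit_self)

lemma flat_graph_height:
  assumes flat: "flat_graph_at M x \<nu>" and x: "x \<in> M" and \<nu>: "norm \<nu> = 1"
  obtains \<rho> h where "\<rho> > 0" "\<And>w. \<nu> \<bullet> w = 0 \<Longrightarrow> norm w \<le> \<rho> / 3 \<Longrightarrow> x + w + h w *\<^sub>R \<nu> \<in> M"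
    "h 0 = 0" "\<And>\<eta>. \<eta> > 0 \<Longrightarrow> \<exists>r>0. \<forall>w. \<nu> \<bullet> w = 0 \<longrightarrow> norm w < r \<longrightarrow> \<bar>h w\<bar> \<le> \<eta> * norm w"
proof -
  obtain \<rho> where \<rho>: "\<rho> > 0" "slope_bounded \<nu> 1 (M \<inter> ball x \<rho>)"
    "\<And>w. \<nu> \<bullet> w = 0 \<Longrightarrow> norm w \<le> \<rho> / 3 \<Longrightarrow> \<exists>t. \<bar>t\<bar> \<le> \<rho> / 3 \<and> x + w + t *\<^sub>R \<nu> \<in> M"
    using flat unfolding flat_graph_at_def by (meson zero_less_one)
  define h where "h w = (SOME t. \<bar>t\<bar> \<le> \<rho> / 3 \<and> x + w + t *\<^sub>R \<nu> \<in> M)" for w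
  have h: "\<bar>h w\<bar> \<le> \<rho> / 3" "x + w + h w *\<^sub>R \<nu> \<in> M" if "\<nu> \<bullet> w = 0" "norm w \<le> \<rho> / 3" for w
    using someI_ex[OF \<rho>(3)[OF that]] unfolding h_def by blast+
  have dist_eq: "dist x (x + w + t *\<^sub>R \<nu>) = norm (w + t *\<^sub>R \<nu>)" for w t
    by (metis add.assoc add_diff_cancel_left' dist_commute dist_norm)
  have near: "x + w + h w *\<^sub>R \<nu> \<in> ball x r"
    if w: "\<nu> \<bullet> w = 0" "norm w \<le> \<rho> / 3" and r: "\<bar>h w\<bar> \<le> norm w" "2 * norm w < r" for w r
    using norm_triangle_ineq[of w "h w *\<^sub>R \<nu>"] \<nu> r by (simp add: dist_eq)
  have slope: "\<bar>h w\<bar> \<le> \<eta> * norm w"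
    if "slope_bounded \<nu> \<eta> (M \<inter> ball x r)" "r > 0" "\<nu> \<bullet> w = 0" "norm w \<le> \<rho> / 3"
      "x + w + h w *\<^sub>R \<nu> \<in> ball x r" for \<eta> r w
  proof -
    let ?y = "x + w + h w *\<^sub>R \<nu>"
    have "?y \<in> M \<inter> ball x r" "x \<in> M \<inter> ball x r" using that x h(2) by auto
    then have "\<bar>\<nu> \<bullet> (?y - x)\<bar> \<le> \<eta> * norm (proj_perp \<nu> (?y - x))"
      using that(1) unfolding slope_bounded_def by blast
    moreover have "?y - x = w + h w *\<^sub>R \<nu>" by simp
    ultimately show ?thesis using inner_normal_proj_perp_shift[OF \<nu> that(3)] by simp
  qed
  have h1: "\<bar>h w\<bar> \<le> norm w" if w: "\<nu> \<bullet> w = 0" "norm w \<le> \<rho> / 3" for w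
  proof -
    have "x + w + h w *\<^sub>R \<nu> \<in> ball x \<rho>"
      using norm_triangle_ineq[of w "h w *\<^sub>R \<nu>"] \<nu> h(1)[OF w] w(2) \<rho>(1) by (simp add: dist_eq)
    then show ?thesis using slope[OF \<rho>(2) \<rho>(1) w] by simp
  qed
  have "\<exists>r>0. \<forall>w. \<nu> \<bullet> w = 0 \<longrightarrow> norm w < r \<longrightarrow> \<bar>h w\<bar> \<le> \<eta> * norm w" if \<eta>: "\<eta> > 0" for \<eta>
  proof -
    obtain r where r: "r > 0" "slope_bounded \<nu> \<eta> (M \<inter> ball x r)"
      using flat \<eta> unfolding flat_graph_at_def by blast
    have "\<bar>h w\<bar> \<le> \<eta> * norm w" if "\<nu> \<bullet> w = 0" "norm w < min (\<rho> / 3) (r / 2)" for w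
      using that h1 near slope[OF r(2) r(1)] by auto
    then show ?thesis using r(1) \<rho>(1) by (intro exI[of _ "min (\<rho> / 3) (r / 2)"]) auto
  qed
  moreover have "h 0 = 0" using h1[of 0] \<rho>(1) by simp
  ultimately show ?thesis using that \<rho>(1) h(2) by blast
qed

lemma flat_graph_tangent_space:
  assumes flat: "flat_graph_at M x \<nu>" and x: "x \<in> M" and \<nu>: "norm \<nu> = 1" and v: "\<nu> \<bullet> v = 0"
  shows "v \<in> tangent_space M x"
proof (cases "v = 0")
  case True
  then show ?thesis
    unfolding tangent_space_def using x by (intro CollectI exI[of _ "\<lambda>_. x"] exI[of _ 1]) auto
next
  case False
  obtain \<rho> h where \<rho>: "\<rho> > 0" and h_in: "\<And>w. \<nu> \<bullet> w = 0 \<Longrightarrow> norm w \<le> \<rho> / 3 \<Longrightarrow> x + w + h w *\<^sub>R \<nu> \<in> M"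
    and "h 0 = 0" and h_small: "\<And>\<eta>. \<eta> > 0 \<Longrightarrow> \<exists>r>0. \<forall>w. \<nu> \<bullet> w = 0 \<longrightarrow> norm w < r \<longrightarrow> \<bar>h w\<bar> \<le> \<eta> * norm w"
    using flat_graph_height[OF flat x \<nu>] by blast
  define \<gamma> where "\<gamma> s = x + s *\<^sub>R v + h (s *\<^sub>R v) *\<^sub>R \<nu>" for s
  define e where "e = \<rho> / (3 * norm v)"
  have e: "e > 0" using \<rho> False by (simp add: e_def)
  have "\<gamma> s \<in> M" if "s \<in> {-e<..<e}" for s
  proof -
    have "\<bar>s\<bar> * norm v \<le> e * norm v" using that by (intro mult_right_mono) auto
    then have "norm (s *\<^sub>R v) \<le> \<rho> / 3" using False by (simp add: e_def)
    then show ?thesis unfolding \<gamma>_def using h_in v by simp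
  qed
  moreover have \<gamma>0: "\<gamma> 0 = x" using \<open>h 0 = 0\<close> by (simp add: \<gamma>_def)
  moreover have "(\<gamma> has_vector_derivative v) (at 0)"
    unfolding has_vector_derivative_def has_derivative_at_alt
  proof (intro conjI allI impI bounded_linear_scaleR_left)
    fix \<epsilon> :: real assume "\<epsilon> > 0"
    then obtain r where r: "r > 0" "\<And>w. \<nu> \<bullet> w = 0 \<Longrightarrow> norm w < r \<Longrightarrow> \<bar>h w\<bar> \<le> \<epsilon> / norm v * norm w"
      using h_small[of "\<epsilon> / norm v"] False by auto
    have "norm (\<gamma> s - \<gamma> 0 - (s - 0) *\<^sub>R v) \<le> \<epsilon> * norm (s - 0)" if "norm (s - 0) < r / norm v" for s
    proof -
      have "\<gamma> s - \<gamma> 0 - (s - 0) *\<^sub>R v = h (s *\<^sub>R v) *\<^sub>R \<nu>" by (simp add: \<gamma>0) (simp add: \<gamma>_def)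
      moreover have "\<bar>h (s *\<^sub>R v)\<bar> \<le> \<epsilon> / norm v * norm (s *\<^sub>R v)"
        using that r(2)[of "s *\<^sub>R v"] v False by (simp add: field_simps)
      ultimately show ?thesis using \<nu> False by simp
    qed
    then show "\<exists>d>0. \<forall>s. norm (s - 0) < d \<longrightarrow> norm (\<gamma> s - \<gamma> 0 - (s - 0) *\<^sub>R v) \<le> \<epsilon> * norm (s - 0)"
      using r(1) False by (intro exI[of _ "r / norm v"]) auto
  qed
  ultimately show ?thesis unfolding tangent_space_def using e by blast
qed

lemma tangent_space_regular_level_set:
  fixes f :: "'a::euclidean_space \<Rightarrow> real"
  assumes U: "open U" "x \<in> U" and f: "\<And>y. y \<in> U \<Longrightarrow> (f has_derivative Df y) (at y)"
    and Df: "\<And>v. continuous_on U (\<lambda>y. Df y v)" and g: "\<And>v. Df x v = g \<bullet> v" "g \<noteq> 0"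
    and M: "M \<inter> U = {y \<in> U. f y = 0}" "x \<in> M"
  shows "tangent_space M x = {v. sgn g \<bullet> v = 0}"
proof (intro set_eqI iffI)
  fix v assume "v \<in> tangent_space M x"
  then have "g \<bullet> v = 0" using tangent_space_level_set_kernel[OF U f[OF U(2)] M(1)] g(1) by simp
  then show "v \<in> {v. sgn g \<bullet> v = 0}" by (simp add: sgn_div_norm)
next
  fix v assume "v \<in> {v. sgn g \<bullet> v = 0}"
  then show "v \<in> tangent_space M x"
    using flat_graph_tangent_space[OF regular_level_set_flat_graph[OF U f Df g M] M(2)] g(2)
    by (simp add: norm_sgn)
qed

lemma level_set_locally_closed:
  fixes f :: "'a::real_normed_vector \<Rightarrow> 'b::real_normed_vector"
  assumes U: "open U" "x \<in> U" and f: "continuous_on U f" and M: "M \<inter> U = {y \<in> U. f y = 0}"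
  shows "\<exists>r>0. closed (M \<inter> cball x r)"
proof -
  obtain r where r: "r > 0" "cball x r \<subseteq> U" using U open_contains_cball by blast
  then have "M \<inter> cball x r = cball x r \<inter> f -` {0}" using M by blast
  moreover have "closed (cball x r \<inter> f -` {0})"
    using continuous_on_subset[OF f r(2)] by (intro continuous_closed_preimage) auto
  ultimately show ?thesis using r(1) by auto
qed

lemma two_sin_half_arccos_inner:
  fixes a b :: "'a::real_inner"
  assumes "norm a = 1" "norm b = 1"
  shows "2 * sin (arccos (a \<bullet> b) / 2) = norm (a - b)"
proof -
  define \<theta> where "\<theta> = arccos (a \<bullet> b)"
  have "\<bar>a \<bullet> b\<bar> \<le> 1" using Cauchy_Schwarz_ineq2[of a b] assms by simp
  then have \<theta>: "0 \<le> \<theta>" "\<theta> \<le> pi" "cos \<theta> = a \<bullet> b"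
    unfolding \<theta>_def by (auto intro: arccos_lbound arccos_ubound cos_arccos)
  have "(2 * sin (\<theta> / 2))\<^sup>2 = 2 - 2 * cos \<theta>"
    using cos_double_sin[of "\<theta> / 2"] by (simp add: power2_eq_square algebra_simps)
  also have "\<dots> = (norm (a - b))\<^sup>2"
    using inner_unit_self[OF assms(1)] inner_unit_self[OF assms(2)] \<theta>(3)
    by (simp add: power2_norm_eq_inner inner_diff_left inner_diff_right inner_commute[of b a])
  finally show ?thesis
    using \<theta>(1,2) unfolding \<theta>_def[symmetric]
    by (intro power2_eq_imp_eq[of "2 * sin (\<theta> / 2)"]) (auto intro: sin_ge_zero)
qed

lemma Omega_unit_normals:
  assumes "norm (n x) = 1" "norm (n y) = 1"
  shows "Omega n x y = norm (n x - n y) / norm (x - y)"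
  using two_sin_half_arccos_inner[OF assms] by (simp add: Omega_def)

lemma Omega_linearization_estimate:
  assumes n: "norm (n x) = 1" "norm (n y) = 1" and \<epsilon>: "norm (y - x) = \<epsilon>" "0 < \<epsilon>"
    and lin: "norm (n y - n x - D (y - x)) \<le> \<eta> * \<epsilon>"
    and D: "linear D" "\<And>v. norm (D v) \<le> K * norm v" "0 \<le> K"
    and u: "norm (sgn (y - x) - u) \<le> 2 * \<eta>"
  shows "\<bar>Omega n x y - norm (D u)\<bar> \<le> \<eta> * (1 + 2 * K)"
proof -
  have Omega_eq: "Omega n x y = norm ((n y - n x) /\<^sub>R \<epsilon>)"
    using Omega_unit_normals[of n x y, OF n] \<epsilon> by (simp add: norm_minus_commute divide_inverse mult.commute)
  have sgn_eq: "sgn (y - x) = (y - x) /\<^sub>R \<epsilon>" using \<epsilon> by (simp add: sgn_div_norm)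
  have "(n y - n x) /\<^sub>R \<epsilon> - D u = (n y - n x - D (y - x)) /\<^sub>R \<epsilon> + D (sgn (y - x) - u)"
    unfolding sgn_eq using D(1) by (simp add: linear_diff linear_scale linear_add algebra_simps)
  then have "norm ((n y - n x) /\<^sub>R \<epsilon> - D u) \<le> norm (n y - n x - D (y - x)) / \<epsilon> + K * (2 * \<eta>)"
    using norm_triangle_ineq[of "(n y - n x - D (y - x)) /\<^sub>R \<epsilon>" "D (sgn (y - x) - u)"]
      D(2)[of "sgn (y - x) - u"] mult_left_mono[OF u D(3)] \<epsilon>(2) by (simp add: divide_inverse ac_simps)
  also have "\<dots> \<le> \<eta> + K * (2 * \<eta>)"
    using lin \<epsilon>(2) by (simp add: divide_le_eq)
  finally show ?thesis
    unfolding Omega_eq using norm_triangle_ineq3[of "(n y - n x) /\<^sub>R \<epsilon>" "D u"]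
    by (simp add: algebra_simps)
qed

lemma slope_bounded_ray_height:
  fixes \<nu> u x :: "'a::real_inner"
  assumes \<nu>: "norm \<nu> = 1" and u: "\<nu> \<bullet> u = 0" "norm u = 1" and \<eta>: "0 \<le> \<eta>"
    and slope: "slope_bounded \<nu> \<eta> Y" and x: "x \<in> Y"
    and ray: "\<And>r. r \<in> I \<Longrightarrow> x + r *\<^sub>R u + T r *\<^sub>R \<nu> \<in> Y"
  shows "\<eta>-lipschitz_on I T" and "0 \<in> I \<Longrightarrow> T 0 = 0"
proof -
  have slope_at: "\<bar>t\<bar> \<le> \<eta> * norm w"
    if "y \<in> Y" "y' \<in> Y" "y - y' = w + t *\<^sub>R \<nu>" "\<nu> \<bullet> w = 0" for y y' w t
    using slope that inner_normal_proj_perp_shift[OF \<nu> that(4)] unfolding slope_bounded_def by metis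
  show "\<eta>-lipschitz_on I T"
  proof (rule lipschitz_onI)
    fix r r' assume "r \<in> I" "r' \<in> I"
    then have "\<bar>T r - T r'\<bar> \<le> \<eta> * norm ((r - r') *\<^sub>R u)"
      using slope_at[OF ray[of r] ray[of r'], where w = "(r - r') *\<^sub>R u" and t = "T r - T r'"] u
      by (simp add: algebra_simps)
    then show "dist (T r) (T r') \<le> \<eta> * dist r r'" using u by (simp add: dist_real_def)
  qed (fact \<eta>)
  show "T 0 = 0" if "0 \<in> I"
    using slope_at[OF ray[OF that] x, where w = 0 and t = "T 0"] by simp
qed

lemma sgn_proj_perp_sphere_onto:
  fixes \<nu> :: "'a::real_inner"
  assumes \<nu>: "norm \<nu> = 1" and x: "x \<in> M" and \<eta>: "0 \<le> \<eta>"
    and slope: "slope_bounded \<nu> \<eta> (M \<inter> ball x \<rho>)"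
    and graph: "\<forall>w. \<nu> \<bullet> w = 0 \<longrightarrow> norm w \<le> \<rho> / 3 \<longrightarrow> (\<exists>t. \<bar>t\<bar> \<le> \<rho> / 3 \<and> x + w + t *\<^sub>R \<nu> \<in> M)"
    and \<epsilon>: "0 < \<epsilon>" "\<epsilon> \<le> \<rho> / 3" and u: "\<nu> \<bullet> u = 0" "norm u = 1"
  shows "\<exists>y\<in>M \<inter> sphere x \<epsilon>. sgn (proj_perp \<nu> (y - x)) = u"
proof -
  define T where "T r = (SOME t. \<bar>t\<bar> \<le> \<rho> / 3 \<and> x + r *\<^sub>R u + t *\<^sub>R \<nu> \<in> M)" for r
  define Y where "Y r = x + r *\<^sub>R u + T r *\<^sub>R \<nu>" for r
  have ru: "\<nu> \<bullet> (r *\<^sub>R u) = 0" for r using u by simp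
  have T: "\<bar>T r\<bar> \<le> \<rho> / 3" "Y r \<in> M" if "r \<in> {0..\<epsilon>}" for r
    using someI_ex[OF graph[rule_format, OF ru[of r]]] that \<epsilon> u unfolding T_def Y_def by auto
  have Y_ball: "Y r \<in> M \<inter> ball x \<rho>" if r: "r \<in> {0..\<epsilon>}" for r
  proof -
    have "norm (Y r - x) \<le> r + \<bar>T r\<bar>"
      using norm_triangle_ineq[of "r *\<^sub>R u" "T r *\<^sub>R \<nu>"] \<nu> u r by (simp add: Y_def)
    then show ?thesis using T[OF r] r \<epsilon> by (simp add: dist_norm norm_minus_commute)
  qed
  have "x \<in> M \<inter> ball x \<rho>" using x \<epsilon> by simp
  note height = slope_bounded_ray_height[where I = "{0..\<epsilon>}", OF \<nu> u \<eta> slope this Y_ball[unfolded Y_def]]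
  define \<phi> where "\<phi> r = norm (Y r - x)" for r
  have "continuous_on {0..\<epsilon>} \<phi>"
    unfolding \<phi>_def Y_def using lipschitz_on_continuous_on[OF height(1)]
    by (intro continuous_intros) auto
  moreover have "\<phi> 0 = 0" using height(2) \<epsilon> by (simp add: \<phi>_def Y_def)
  moreover have "\<epsilon> \<le> \<phi> \<epsilon>"
    using norm_proj_perp_le[OF \<nu>, of "Y \<epsilon> - x"] inner_normal_proj_perp_shift[OF \<nu> ru[of \<epsilon>]] u \<epsilon>
    by (simp add: \<phi>_def Y_def)
  ultimately obtain r where r: "0 \<le> r" "r \<le> \<epsilon>" "\<phi> r = \<epsilon>"
    using IVT'[of \<phi> 0 \<epsilon> \<epsilon>] \<epsilon> by auto
  then have "r \<noteq> 0" using \<open>\<phi> 0 = 0\<close> \<epsilon> by auto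
  have "Y r \<in> M \<inter> sphere x \<epsilon>"
    using T(2)[of r] r by (simp add: \<phi>_def dist_norm norm_minus_commute)
  moreover have "sgn (proj_perp \<nu> (Y r - x)) = u"
    using inner_normal_proj_perp_shift[OF \<nu> ru[of r]] r \<open>r \<noteq> 0\<close> u
    by (simp add: Y_def sgn_scaleR sgn_div_norm)
  ultimately show ?thesis by blast
qed

lemma sphere_radial_projection:
  fixes M :: "'a::real_inner set" and x \<nu> :: 'a and \<eta> \<epsilon> \<rho> :: real
  defines "A \<equiv> M \<inter> sphere x \<epsilon>" and "\<pi> \<equiv> \<lambda>y. sgn (proj_perp \<nu> (y - x))"
  assumes \<nu>: "norm \<nu> = 1" and x: "x \<in> M" and \<eta>: "0 < \<eta>" "\<eta> < 1"
    and slope: "slope_bounded \<nu> \<eta> (M \<inter> ball x \<rho>)"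
    and graph: "\<forall>w. \<nu> \<bullet> w = 0 \<longrightarrow> norm w \<le> \<rho> / 3 \<longrightarrow> (\<exists>t. \<bar>t\<bar> \<le> \<rho> / 3 \<and> x + w + t *\<^sub>R \<nu> \<in> M)"
    and \<epsilon>: "0 < \<epsilon>" "\<epsilon> \<le> \<rho> / 3"
  shows "\<pi> ` A = {v. \<nu> \<bullet> v = 0 \<and> norm v = 1}"
    and "\<And>a b. a \<in> A \<Longrightarrow> b \<in> A \<Longrightarrow> (1 - \<eta>) / \<epsilon> * dist a b \<le> dist (\<pi> a) (\<pi> b)"
    and "\<And>a b. a \<in> A \<Longrightarrow> b \<in> A \<Longrightarrow> dist (\<pi> a) (\<pi> b) \<le> (1 + \<eta>)\<^sup>2 / \<epsilon> * dist a b"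
    and "\<And>y. y \<in> A \<Longrightarrow> norm (sgn (y - x) - \<pi> y) \<le> 2 * \<eta>"
proof -
  have A_ball: "y \<in> M \<inter> ball x \<rho>" "norm (y - x) = \<epsilon>" if "y \<in> A" for y
    using that \<epsilon> by (auto simp: A_def dist_norm norm_minus_commute)
  have x_ball: "x \<in> M \<inter> ball x \<rho>" using x \<epsilon> by simp
  have tilt: "\<bar>\<nu> \<bullet> (y - y')\<bar> \<le> \<eta> * norm (proj_perp \<nu> (y - y'))"
    if "y \<in> M \<inter> ball x \<rho>" "y' \<in> M \<inter> ball x \<rho>" for y y'
    using slope that unfolding slope_bounded_def by blast
  have "proj_perp \<nu> (y - x) \<noteq> 0" if "y \<in> A" for y
    using norm_le_proj_perp_slope[OF \<nu> _ tilt[OF A_ball(1)[OF that] x_ball]] \<eta> \<epsilon> A_ball(2)[OF that] by auto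
  then show "\<pi> ` A = {v. \<nu> \<bullet> v = 0 \<and> norm v = 1}"
    using inner_proj_perp[OF \<nu>] sgn_proj_perp_sphere_onto[OF \<nu> x _ slope graph \<epsilon>] \<eta>
    unfolding A_def \<pi>_def by (fastforce simp: sgn_div_norm norm_sgn)
  show "(1 - \<eta>) / \<epsilon> * dist a b \<le> dist (\<pi> a) (\<pi> b)" "dist (\<pi> a) (\<pi> b) \<le> (1 + \<eta>)\<^sup>2 / \<epsilon> * dist a b"
    if "a \<in> A" "b \<in> A" for a b
    using sgn_proj_perp_bi_lipschitz[OF \<nu> _ _ \<epsilon>(1) A_ball(2)[OF that(1)] A_ball(2)[OF that(2)]
        tilt[OF A_ball(1)[OF that(1)] x_ball] tilt[OF A_ball(1)[OF that(2)] x_ball]]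
      tilt[OF A_ball(1)[OF that(1)] A_ball(1)[OF that(2)]] \<eta>
    by (simp_all add: \<pi>_def dist_norm)
  show "norm (sgn (y - x) - \<pi> y) \<le> 2 * \<eta>" if "y \<in> A" for y
    using sgn_proj_perp_approx[OF \<nu> _ tilt[OF A_ball(1)[OF that] x_ball]] \<eta> by (simp add: \<pi>_def)
qed

lemma sphere_average_estimate:
  fixes M :: "'a::euclidean_space set" and x \<nu> :: 'a and n D :: "'a \<Rightarrow> 'a" and s \<eta> \<epsilon> \<rho> K :: real
  defines "H \<equiv> hausdorff_measure s :: 'a measure" and "A \<equiv> M \<inter> sphere x \<epsilon>"
    and "S \<equiv> {v. \<nu> \<bullet> v = 0 \<and> norm v = 1}"
  assumes s: "s > 0" and \<nu>: "norm \<nu> = 1" and x: "x \<in> M" and \<eta>: "0 < \<eta>" "\<eta> < 1"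
    and slope: "slope_bounded \<nu> \<eta> (M \<inter> ball x \<rho>)"
    and graph: "\<forall>w. \<nu> \<bullet> w = 0 \<longrightarrow> norm w \<le> \<rho> / 3 \<longrightarrow> (\<exists>t. \<bar>t\<bar> \<le> \<rho> / 3 \<and> x + w + t *\<^sub>R \<nu> \<in> M)"
    and \<epsilon>: "0 < \<epsilon>" "\<epsilon> \<le> \<rho> / 3" and A: "closed A"
    and n: "continuous_on A n" "\<And>y. y \<in> A \<Longrightarrow> norm (n y) = 1" "norm (n x) = 1"
    and D: "linear D" "\<And>v. norm (D v) \<le> K * norm v" "0 \<le> K"
    and lin: "\<And>y. y \<in> A \<Longrightarrow> norm (n y - n x - D (y - x)) \<le> \<eta> * \<epsilon>"
  shows "\<bar>(LINT y:A|H. Omega n x y) / measure H A - (LINT v:S|H. norm (D v)) / measure H S\<bar>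
    \<le> \<eta> * (1 + 2 * K) + (((1 + \<eta>)\<^sup>2 / (1 - \<eta>)) powr s - 1) * K"
proof -
  define \<pi> where "\<pi> y = sgn (proj_perp \<nu> (y - x))" for y
  note \<pi> = sphere_radial_projection[OF \<nu> x \<eta> slope graph \<epsilon>, folded A_def S_def]
  have A_norm: "norm (y - x) = \<epsilon>" "norm (x - y) = \<epsilon>" if "y \<in> A" for y
    using that by (auto simp: A_def dist_norm norm_minus_commute)
  have "\<bar>Omega n x y - norm (D (\<pi> y))\<bar> \<le> \<eta> * (1 + 2 * K)" if "y \<in> A" for y
    using Omega_linearization_estimate[OF n(3) n(2)[OF that] A_norm(1)[OF that] \<epsilon>(1) lin[OF that] D
        \<pi>(4)[OF that]] by (simp add: \<pi>_def)
  moreover have "continuous_on A (Omega n x)"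
  proof -
    have "continuous_on A (\<lambda>y. norm (n x - n y) / \<epsilon>)" using n(1) \<epsilon>(1) by (intro continuous_intros) auto
    then show ?thesis
      by (rule continuous_on_cong[THEN iffD1, rotated 2]) (use A_norm n in \<open>auto simp: Omega_unit_normals\<close>)
  qed
  moreover have "0 < (1 - \<eta>) / \<epsilon>" "(1 - \<eta>) / \<epsilon> \<le> (1 + \<eta>)\<^sup>2 / \<epsilon>"
    using \<eta> \<epsilon> by (auto simp: divide_right_mono power2_eq_square algebra_simps)
  moreover have "((1 + \<eta>)\<^sup>2 / \<epsilon>) / ((1 - \<eta>) / \<epsilon>) = (1 + \<eta>)\<^sup>2 / (1 - \<eta>)"
    using \<epsilon> by simp
  moreover have "closed S" unfolding S_def
    by (intro closed_Collect_conj closed_Collect_eq continuous_intros)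
  moreover have "continuous_on UNIV (\<lambda>v. norm (D v))"
    using D(1) by (intro continuous_intros linear_continuous_on) (simp add: linear_conv_bounded_linear)
  moreover have "0 \<le> norm (D v) \<and> norm (D v) \<le> K" if "v \<in> S" for v
    using D(2)[of v] that by (simp add: S_def)
  ultimately show ?thesis
    unfolding H_def
    using hausdorff_average_bi_lipschitz[OF s A, of S \<pi> "(1 - \<eta>) / \<epsilon>" "(1 + \<eta>)\<^sup>2 / \<epsilon>"
        "\<lambda>v. norm (D v)" K "Omega n x" "\<eta> * (1 + 2 * K)"] \<pi>(1-3) \<eta> D(3)
    by (simp add: lipschitz_on_def \<pi>_def)
qed

lemma distortion_error_small:
  fixes K s e :: real
  assumes e: "e > 0"
  obtains \<eta> where "0 < \<eta>" "\<eta> < 1" "\<eta> * (1 + 2 * K) + (((1 + \<eta>)\<^sup>2 / (1 - \<eta>)) powr s - 1) * K < e"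
proof -
  define E where "E \<eta> = \<eta> * (1 + 2 * K) + (((1 + \<eta>)\<^sup>2 / (1 - \<eta>)) powr s - 1) * K" for \<eta>
  have "(E \<longlongrightarrow> 0 * (1 + 2 * K) + (((1 + 0)\<^sup>2 / (1 - 0)) powr s - 1) * K) (at_right 0)"
    unfolding E_def by (intro tendsto_intros) auto
  then have "\<forall>\<^sub>F \<eta> in at_right 0. E \<eta> < e"
    using e by (intro order_tendstoD(2)) auto
  moreover have "\<forall>\<^sub>F \<eta> in at_right 0. \<eta> < (1::real)"
    unfolding eventually_at_right_field by (intro exI[of _ 1]) auto
  ultimately have "\<forall>\<^sub>F \<eta> in at_right 0. 0 < \<eta> \<and> \<eta> < 1 \<and> E \<eta> < e"
    using eventually_at_right_less[of 0] by eventually_elim auto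
  then show ?thesis
    using that eventually_happens[of _ "at_right (0::real)"] unfolding E_def by auto
qed

lemma sphere_average_tendsto:
  fixes M :: "'a::euclidean_space set" and x \<nu> :: 'a and n D :: "'a \<Rightarrow> 'a" and s r :: real
  defines "H \<equiv> hausdorff_measure s :: 'a measure" and "S \<equiv> {v. \<nu> \<bullet> v = 0 \<and> norm v = 1}"
  assumes s: "s > 0" and \<nu>: "norm \<nu> = 1" and x: "x \<in> M" and flat: "flat_graph_at M x \<nu>"
    and r: "r > 0" "closed (M \<inter> cball x r)"
    and n: "continuous_on (M \<inter> cball x r) n" "\<And>y. y \<in> M \<inter> cball x r \<Longrightarrow> norm (n y) = 1"
    and D: "(n has_derivative D) (at x within M)"
  shows "((\<lambda>\<epsilon>. (LINT y:M \<inter> sphere x \<epsilon>|H. Omega n x y) / measure H (M \<inter> sphere x \<epsilon>))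
      \<longlongrightarrow> (LINT v:S|H. norm (D v)) / measure H S) (at_right 0)"
proof (rule tendstoI)
  fix e :: real assume e: "e > 0"
  obtain K where K: "K > 0" "\<And>v. norm (D v) \<le> K * norm v"
    using bounded_linear.pos_bounded[OF has_derivative_bounded_linear[OF D]] by (auto simp: mult.commute)
  obtain \<eta> where \<eta>: "0 < \<eta>" "\<eta> < 1" "\<eta> * (1 + 2 * K) + (((1 + \<eta>)\<^sup>2 / (1 - \<eta>)) powr s - 1) * K < e"
    using distortion_error_small[OF e] by blast
  obtain \<rho> where \<rho>: "\<rho> > 0" "slope_bounded \<nu> \<eta> (M \<inter> ball x \<rho>)"
    "\<forall>w. \<nu> \<bullet> w = 0 \<longrightarrow> norm w \<le> \<rho> / 3 \<longrightarrow> (\<exists>t. \<bar>t\<bar> \<le> \<rho> / 3 \<and> x + w + t *\<^sub>R \<nu> \<in> M)"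
    using flat \<eta>(1) unfolding flat_graph_at_def by blast
  obtain d where d: "d > 0"
    "\<And>y. y \<in> M \<Longrightarrow> norm (y - x) < d \<Longrightarrow> norm (n y - n x - D (y - x)) \<le> \<eta> * norm (y - x)"
    using D \<eta>(1) unfolding has_derivative_within_alt by blast
  have "dist ((LINT y:M \<inter> sphere x \<epsilon>|H. Omega n x y) / measure H (M \<inter> sphere x \<epsilon>))
      ((LINT v:S|H. norm (D v)) / measure H S) < e"
    if \<epsilon>: "0 < \<epsilon>" "\<epsilon> < min (min (\<rho> / 3) d) r" for \<epsilon>
  proof -
    have A: "M \<inter> sphere x \<epsilon> = (M \<inter> cball x r) \<inter> sphere x \<epsilon>" using \<epsilon> by auto
    have "\<bar>(LINT y:M \<inter> sphere x \<epsilon>|H. Omega n x y) / measure H (M \<inter> sphere x \<epsilon>)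
        - (LINT v:S|H. norm (D v)) / measure H S\<bar>
        \<le> \<eta> * (1 + 2 * K) + (((1 + \<eta>)\<^sup>2 / (1 - \<eta>)) powr s - 1) * K"
      unfolding H_def S_def
    proof (rule sphere_average_estimate[OF s \<nu> x \<eta>(1,2) \<rho>(2,3)])
      show "closed (M \<inter> sphere x \<epsilon>)" unfolding A using r(2) by auto
      show "continuous_on (M \<inter> sphere x \<epsilon>) n" using continuous_on_subset[OF n(1)] A by auto
      show "norm (n y - n x - D (y - x)) \<le> \<eta> * \<epsilon>" if "y \<in> M \<inter> sphere x \<epsilon>" for y
        using d(2)[of y] that \<epsilon> by (simp add: dist_norm norm_minus_commute)
      show "linear D" using has_derivative_linear[OF D] .
    qed (use \<epsilon> A n(2) x r(1) K in auto)
    then show ?thesis using \<eta>(3) by (simp add: dist_real_def)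
  qed
  then show "\<forall>\<^sub>F \<epsilon> in at_right 0. dist ((LINT y:M \<inter> sphere x \<epsilon>|H. Omega n x y) / measure H (M \<inter> sphere x \<epsilon>))
      ((LINT v:S|H. norm (D v)) / measure H S) < e"
    unfolding eventually_at_right_field using \<rho>(1) d(1) r(1) by (intro exI[of _ "min (min (\<rho> / 3) d) r"]) auto
qed

lemma smooth_hypersurface_local_structure:
  fixes M :: "'a::euclidean_space set"
  assumes M: "smooth_hypersurface M" and x: "x \<in> M"
  obtains \<nu> r where "norm \<nu> = 1" "tangent_space M x = {v. \<nu> \<bullet> v = 0}" "flat_graph_at M x \<nu>"
    "r > 0" "closed (M \<inter> cball x r)"
proof -
  obtain U f where U: "x \<in> U" "smooth_on U f" "\<forall>y\<in>U. frechet_derivative f (at y) \<noteq> (\<lambda>v. 0)"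
    and MU: "M \<inter> U = {y \<in> U. f y = (0::real)}"
    using M x unfolding smooth_hypersurface_def by blast
  define Df where "Df y = frechet_derivative f (at y)" for y
  note f = smooth_on_derivative[OF U(2), folded Df_def]
  define g where "g = adjoint (Df x) 1"
  have g: "Df x v = g \<bullet> v" for v
    using adjoint_works[OF has_derivative_linear[OF f(2)[OF U(1)]], of v 1]
    by (simp add: g_def inner_commute)
  have "g \<noteq> 0"
    using U(1,3) g by (auto simp: Df_def fun_eq_iff)
  moreover have "continuous_on U f"
    using f(2) by (meson continuous_at_imp_continuous_on has_derivative_continuous)
  ultimately show ?thesis
    using that[of "sgn g"] level_set_locally_closed[OF f(1) U(1) _ MU]
      tangent_space_regular_level_set[OF f(1) U(1) f(2,3) g _ MU x]
      regular_level_set_flat_graph[OF f(1) U(1) f(2,3) g _ MU x]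
    by (auto simp: norm_sgn)
qed

theorem mainTheorem4:
  fixes M V :: "'a::euclidean_space set" and n :: "'a \<Rightarrow> 'a" and x :: 'a and m :: nat
  assumes "m = DIM('a) - 1" and "m \<ge> 2"
    and "smooth_hypersurface M" and "x \<in> M"
    and "open V" and "x \<in> V"
    and "smooth_on_subset (M \<inter> V) n"
    and "\<forall>y\<in>M \<inter> V. norm (n y) = 1 \<and> (\<forall>v\<in>tangent_space M y. n y \<bullet> v = 0)"
  shows "((\<lambda>\<epsilon>. let A = {y \<in> M \<inter> V. dist x y = \<epsilon>}; H = hausdorff_measure (real m - 1) in
              (LINT y:A|H. Omega n x y) / measure H A)
          \<longlongrightarrow> psi m (tangent_space M x) (shape_operator M n x)) (at_right 0)"
proof -
  define H where "H = (hausdorff_measure (real m - 1) :: 'a measure)"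
  obtain \<nu> r1 where \<nu>: "norm \<nu> = 1" "tangent_space M x = {v. \<nu> \<bullet> v = 0}" "flat_graph_at M x \<nu>"
    and r1: "r1 > 0" "closed (M \<inter> cball x r1)"
    using smooth_hypersurface_local_structure[OF assms(3,4)] by blast
  obtain r2 where r2: "r2 > 0" "cball x r2 \<subseteq> V" using assms(5,6) open_contains_cball by blast
  define r where "r = min r1 r2"
  define D where "D = frechet_derivative n (at x within M)"
  define S where "S = {v. \<nu> \<bullet> v = 0 \<and> norm v = 1}"
  note n = smooth_on_subset_differentiable[OF assms(7,5)]
  have "M \<inter> cball x r = (M \<inter> cball x r1) \<inter> cball x r" by (auto simp: r_def)
  then have "closed (M \<inter> cball x r)" using r1(2) by auto
  moreover have "(n has_derivative D) (at x within M)"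
    using n(2) assms(4,6) by (simp add: D_def frechet_derivative_works[symmetric])
  moreover have "M \<inter> cball x r \<subseteq> M \<inter> V" using r2 by (auto simp: r_def)
  ultimately have "((\<lambda>\<epsilon>. (LINT y:M \<inter> sphere x \<epsilon>|H. Omega n x y) / measure H (M \<inter> sphere x \<epsilon>))
      \<longlongrightarrow> (LINT v:S|H. norm (D v)) / measure H S) (at_right 0)"
    unfolding H_def S_def using assms(2,8) r1(1) r2(1) continuous_on_subset[OF n(1)]
    by (intro sphere_average_tendsto[OF _ \<nu>(1) assms(4) \<nu>(3)]) (auto simp: r_def)
  moreover have "psi m (tangent_space M x) (shape_operator M n x) = (LINT v:S|H. norm (D v)) / measure H S"
    unfolding psi_def shape_operator_def Let_def H_def S_def D_def \<nu>(2) by (simp add: conj_commute)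
  moreover have "\<forall>\<^sub>F \<epsilon> in at_right 0. {y \<in> M \<inter> V. dist x y = \<epsilon>} = M \<inter> sphere x \<epsilon>"
    unfolding eventually_at_right_field using r2 by (intro exI[of _ r2]) auto
  ultimately show ?thesis
    unfolding H_def by (elim filterlim_mono_eventually) (auto elim!: eventually_mono simp: Let_def)
qed

end
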